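(* In the Setting of the context, run DAT-SGD with linear weights $\alpha_t=t$ and a learning rate $0<\eta\le\rho^2/K$, where $K=\sqrt{5120}\,L$. Then for every $T\ge1$, \[ B_T:=\sum_{\tau=1}^T\alpha_\tau^2\,\mathbb{E}\Big\|\frac1M\sum_{i=1}^M\nabla f_i(x_\tau^i)-\nabla f(\bar x_\tau)\Big\|^2\le\frac{K^2\tilde\sigma^2\eta^2}{2\rho^4}\sum_{\tau=1}^T\alpha_\tau^2, \] where $\tilde\sigma^2=2\sigma^2+\zeta^2$.
   Context: Setting. Let $M,d\ge1$ be integers. For each $i\in\{1,\dots,M\}$, $\mathcal{D}_i$ is a probability distribution, $f_i(\cdot,z):\mathbb{R}^d\to\mathbb{R}$ is differentiable for each sample $z$, and $f_i(x)=\mathbb{E}_{z\sim\mathcal{D}_i}[f_i(x,z)]$ is differentiable with $\mathbb{E}_{z\sim\mathcal{D}_i}[\nabla f_i(x,z)]=\nabla f_i(x)$ for all $x$. Let $f=\frac1M\sum_{i=1}^M f_i$. Standing assumptions: (smoothness) each $\nabla f_i$ is $L$-Lipschitz, with $L>0$; (bounded variance) $\mathbb{E}_{z\sim\mathcal{D}_i}\|\nabla f_i(x,z)-\nabla f_i(x)\|^2\le\sigma^2$ for all $x\in\mathbb{R}^d$, $i\in[M]$; (bounded heterogeneity) $\frac1M\sum_{i=1}^M\|\nabla f_i(x)-\nabla f(x)\|^2\le\zeta^2$ for all $x$. Write $\tilde\sigma^2=2\sigma^2+\zeta^2$. Gossip matrix: $P\in[0,1]^{M\times M}$ is symmetric with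 $P\mathbf{1}=\mathbf{1}$ (hence doubly stochastic); its (real) eigenvalues satisfy $1=\lambda_1>|\lambda_2|\ge\cdots\ge|\lambda_M|$, and the spectral gap is $\rho=1-|\lambda_2|\in(0,1]$. Algorithm DAT-SGD: inputs $w_1\in\mathbb{R}^d$, learning rate $\eta>0$, positive weights $(\alpha_t)_{t\ge1}$; let $\alpha_{1:t}=\sum_{s=1}^t\alpha_s$, $\alpha_{1:0}=0$, $\delta_t=\alpha_t/\alpha_{1:t}$. Initialize $w_1^i=x_1^i=w_1$ for all $i$. At each round $t=1,2,\dots$, every machine $i$ draws $z_t^i\sim\mathcal{D}_i$ independently of all other samples, sets $g_t^i=\nabla f_i(x_t^i,z_t^i)$, $w_{t+1/2}^i=w_t^i-\eta\alpha_t g_t^i$, $x_{t+1/2}^i=(1-\delta_t)x_t^i+\delta_t w_{t+1/2}^i$, and then $w_{t+1}^i=\sum_{j=1}^M P_{ij}w_{t+1/2}^j$, $x_{t+1}^i=\sum_{j=1}^M P_{ij}x_{t+1/2}^j$. Averages: $\bar x_t=\frac1M\sum_i x_t^i$, $\bar w_t=\frac1M\sum_i w_t^i$, $\bar g_t=\frac1M\sum_i g_t^i$. *)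

theory Defs
  imports "HOL-Probability.Probability" "Jordan_Normal_Form.Char_Poly"
begin

definition gossip_mat :: "nat \<Rightarrow> (nat \<Rightarrow> nat \<Rightarrow> real) \<Rightarrow> real mat" where
  "gossip_mat m P = mat m m (\<lambda>(i, j). P i j)"

text \<open>Gossip matrix assumptions: entries in [0,1], symmetric, rows sum to one, and the
 (real) eigenvalues with multiplicity satisfy 1 = lambda_1 > |lambda_2| >= ... ,
 i.e. 1 is an eigenvalue of algebraic multiplicity exactly one and every other eigenvalue
 has modulus < 1.\<close>
definition gossip_matrix :: "nat \<Rightarrow> (nat \<Rightarrow> nat \<Rightarrow> real) \<Rightarrow> bool" where
  "gossip_matrix m P \<longleftrightarrow>
     (\<forall>i<m. \<forall>j<m. 0 \<le> P i j \<and> P i j \<le> 1) \<and>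
     (\<forall>i<m. \<forall>j<m. P i j = P j i) \<and>
     (\<forall>i<m. (\<Sum>j<m. P i j) = 1) \<and>
     order 1 (char_poly (gossip_mat m P)) = 1 \<and>
     (\<forall>l. eigenvalue (gossip_mat m P) l \<and> l \<noteq> 1 \<longrightarrow> \<bar>l\<bar> < 1)"

text \<open>Spectral gap rho = 1 - |lambda_2|, where |lambda_2| is the largest modulus of an eigenvalue
 other than lambda_1 = 1 (this is |lambda_2| since 1 is a simple eigenvalue); for m = 1 there is
 no second eigenvalue and we use the convention |lambda_2| = 0.\<close>
definition spectral_gap :: "nat \<Rightarrow> (nat \<Rightarrow> nat \<Rightarrow> real) \<Rightarrow> real" where
  "spectral_gap m P =
     1 - Max (insert 0 {\<bar>l\<bar> | l. eigenvalue (gossip_mat m P) l \<and> l \<noteq> 1})"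

definition dat_round ::
  "nat \<Rightarrow> (nat \<Rightarrow> nat \<Rightarrow> real) \<Rightarrow> (nat \<Rightarrow> 'a::real_vector \<Rightarrow> 'z \<Rightarrow> 'a) \<Rightarrow>
   real \<Rightarrow> (nat \<Rightarrow> real) \<Rightarrow> nat \<Rightarrow> (nat \<Rightarrow> 'z) \<Rightarrow>
   (nat \<Rightarrow> 'a) \<times> (nat \<Rightarrow> 'a) \<Rightarrow> (nat \<Rightarrow> 'a) \<times> (nat \<Rightarrow> 'a)" where
  "dat_round m P G \<eta> \<alpha> t zt wx =
     (let w = fst wx; x = snd wx;
          \<delta> = \<alpha> t / (\<Sum>s=1..t. \<alpha> s);
          g = (\<lambda>i. G i (x i) (zt i));
          wh = (\<lambda>i. w i - (\<eta> * \<alpha> t) *\<^sub>R g i);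
          xh = (\<lambda>i. (1 - \<delta>) *\<^sub>R x i + \<delta> *\<^sub>R wh i)
      in (\<lambda>i. \<Sum>j<m. P i j *\<^sub>R wh j, \<lambda>i. \<Sum>j<m. P i j *\<^sub>R xh j))"

text \<open>dat_state ... z n = (w_{n+1}, x_{n+1}); z t i is the sample z_t^i.\<close>
primrec dat_state ::
  "nat \<Rightarrow> (nat \<Rightarrow> nat \<Rightarrow> real) \<Rightarrow> (nat \<Rightarrow> 'a::real_vector \<Rightarrow> 'z \<Rightarrow> 'a) \<Rightarrow>
   real \<Rightarrow> (nat \<Rightarrow> real) \<Rightarrow> 'a \<Rightarrow> (nat \<Rightarrow> nat \<Rightarrow> 'z) \<Rightarrow> nat \<Rightarrow>
   (nat \<Rightarrow> 'a) \<times> (nat \<Rightarrow> 'a)" where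
  "dat_state m P G \<eta> \<alpha> w1 z 0 = (\<lambda>i. w1, \<lambda>i. w1)"
| "dat_state m P G \<eta> \<alpha> w1 z (Suc n) =
     dat_round m P G \<eta> \<alpha> (Suc n) (z (Suc n)) (dat_state m P G \<eta> \<alpha> w1 z n)"

definition dat_x ::
  "nat \<Rightarrow> (nat \<Rightarrow> nat \<Rightarrow> real) \<Rightarrow> (nat \<Rightarrow> 'a::real_vector \<Rightarrow> 'z \<Rightarrow> 'a) \<Rightarrow>
   real \<Rightarrow> (nat \<Rightarrow> real) \<Rightarrow> 'a \<Rightarrow> (nat \<Rightarrow> nat \<Rightarrow> 'z) \<Rightarrow> nat \<Rightarrow> nat \<Rightarrow> 'a" where
  "dat_x m P G \<eta> \<alpha> w1 z t i = snd (dat_state m P G \<eta> \<alpha> w1 z (t - 1)) i"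

end

(*
  Write W_t and X_t for the consensus distances sum_i |w_t^i - avg w_t|^2 and
  sum_i |x_t^i - avg x_t|^2.  As P is symmetric and doubly stochastic with 1 a simple
  eigenvalue, one gossip step contracts the consensus distance by (1 - rho)^2: a maximiser of
  |P v|^2 over unit sum-zero vectors v is an eigenvector of P^2, whose eigenvalue is the square
  of an eigenvalue of P other than 1.  Combined with Young's inequality this yields, for the
  linear weights alpha_t = t,
    W_(t+1) <= (1 - rho) W_t + 3 (eta t)^2 / rho * B_t,
    X_(t+1) <= (1 - rho) X_t + 8 / (rho (t + 1)^2) W_t + 24 eta^2 / rho^2 * B_t,
  where B_t = N_t + L^2 X_t + M zeta^2 and N_t is the sampling noise at x_t.  Since the
  round-t samples are independent of x_t, E N_t <= M sigma^2.  Induction on t then gives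
  E W_t <= 9 t^2 S / rho^2 and E X_t <= 2560 S / rho^4 with S = M (2 sigma^2 + zeta^2) eta^2,
  the step-size condition 5120 eta^2 L^2 <= rho^4 closing the induction.
  Finally, L-smoothness bounds the gradient gap at round tau by L^2 X_tau / M.
*)

theory Submission
  imports
    Defs
    "Jordan_Normal_Form.Jordan_Normal_Form_Uniqueness"
    "Jordan_Normal_Form.Spectral_Radius"
begin

section \<open>Eigenvalues of gossip matrices\<close>

lemma order_char_poly_map_of_real:
  fixes A :: "real mat"
  assumes "A \<in> carrier_mat n n"
  shows "Polynomial.order (complex_of_real a) (char_poly (map_mat complex_of_real A))
           = Polynomial.order a (char_poly A)"
proof -
  interpret h: map_poly_inj_idom_divide_hom complex_of_real by unfold_locales
  show ?thesis
    unfolding of_real_hom.char_poly_hom[OF assms] by (rule h.order_hom)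
qed

lemma kernel_dim_char_matrix_le_order:
  fixes A :: "complex mat"
  assumes A: "A \<in> carrier_mat n n"
  shows "kernel_dim (char_matrix A e) \<le> Polynomial.order e (char_poly A)"
proof -
  obtain as where "char_poly A = (\<Prod>a\<leftarrow>as. [:- a, 1:])"
    using char_poly_factorized[OF A] by blast
  then obtain n_as where jnf: "jordan_nf A n_as" using jordan_nf_exists[OF A] by blast
  have "kernel_dim (char_matrix A e) = dim_gen_eigenspace A e 1"
    unfolding dim_gen_eigenspace_def using A by simp
  also have "\<dots> = (\<Sum>k\<leftarrow>map fst [(k, a)\<leftarrow>n_as. a = e]. min 1 k)"
    by (rule dim_gen_eigenspace[OF jnf])
  also have "\<dots> \<le> sum_list (map fst [(k, a)\<leftarrow>n_as. a = e])"
    by (induction n_as) auto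
  also have "\<dots> = Polynomial.order e (char_poly A)"
    unfolding jordan_nf_order[OF jnf] by (simp add: case_prod_beta')
  finally show ?thesis .
qed

lemma two_le_kernel_dim:
  fixes B :: "'a::field mat" and v w :: "'a vec"
  assumes B: "B \<in> carrier_mat n n"
    and v: "v \<in> mat_kernel B" and w: "w \<in> mat_kernel B"
    and i: "i < n" and j: "j < n" and minor: "v $ i * w $ j \<noteq> v $ j * w $ i"
  shows "2 \<le> kernel_dim B"
proof -
  interpret K: kernel n n B by unfold_locales (rule B)
  have vw: "v \<noteq> w" using minor by (auto simp: mult.commute)
  have "\<not> K.lin_dep {v, w}"
  proof (rule K.Ker.finite_lin_indpt2)
    fix a assume "K.lincomb a {v, w} = 0\<^sub>v n"
    then have comb: "a v * v $ k + a w * w $ k = 0" if "k < n" for k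
      using K.lincomb_index[OF that, of "{v, w}" a] v w vw that by simp
    define d where "d = v $ i * w $ j - v $ j * w $ i"
    have "a v * d = w $ j * (a v * v $ i + a w * w $ i) - w $ i * (a v * v $ j + a w * w $ j)"
      "a w * d = v $ i * (a v * v $ j + a w * w $ j) - v $ j * (a v * v $ i + a w * w $ i)"
      unfolding d_def by (simp_all add: algebra_simps)
    then have "a v * d = 0" "a w * d = 0" unfolding comb[OF i] comb[OF j] by simp_all
    moreover have "d \<noteq> 0" using minor unfolding d_def by simp
    ultimately show "\<forall>u\<in>{v, w}. a u = 0" by simp
  qed (use v w in simp_all)
  moreover obtain Bs where "finite Bs" "K.basis Bs" using kernel_basis_exists[OF B] by blast
  then have "K.Ker.fin_dim" unfolding K.Ker.fin_dim_def K.Ker.basis_def by blast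
  ultimately have "card {v, w} \<le> K.dim" using v w by (intro K.Ker.li_le_dim(2)) simp_all
  then show ?thesis using vw by simp
qed

lemma mat_kernel_char_matrix_iff:
  fixes A :: "'a::field mat"
  assumes A: "A \<in> carrier_mat n n" and v: "v \<in> carrier_vec n"
  shows "v \<in> mat_kernel (char_matrix A e) \<longleftrightarrow> A *\<^sub>v v = e \<cdot>\<^sub>v v"
proof -
  have dim: "dim_row (char_matrix A e) = n" "dim_col (char_matrix A e) = n"
    using char_matrix_closed[OF A] by auto
  show ?thesis
  proof (cases "v = 0\<^sub>v n")
    case True
    then show ?thesis using A dim by (auto simp: mat_kernel_def)
  next
    case False
    then show ?thesis
      using eigenvector_char_matrix[OF A, of v e] A v dim unfolding eigenvector_def mat_kernel_def
      by auto
  qed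
qed

definition mix :: "nat \<Rightarrow> (nat \<Rightarrow> nat \<Rightarrow> real) \<Rightarrow> (nat \<Rightarrow> 'a::real_vector) \<Rightarrow> nat \<Rightarrow> 'a" where
  "mix m P u = (\<lambda>i. \<Sum>j<m. P i j *\<^sub>R u j)"

lemma mix_real: "mix m P v i = (\<Sum>j<m. P i j * v j)"
  by (simp add: mix_def)

lemma gossip_mat_carrier: "gossip_mat m P \<in> carrier_mat m m"
  by (simp add: gossip_mat_def)

lemma gossip_mat_mult_vec:
  fixes u :: "nat \<Rightarrow> real"
  shows "map_mat of_real (gossip_mat m P) *\<^sub>v vec m (\<lambda>i. of_real (u i))
           = vec m (\<lambda>i. of_real (mix m P u i) :: 'a::{field, real_algebra_1})"
  by (rule eq_vecI) (auto simp: gossip_mat_def mix_def scalar_prod_def atLeast0LessThan)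

lemma eigenvalue_gossip_matI:
  assumes "\<forall>i<m. mix m P y i = l * y i" and "k < m" and "y k \<noteq> 0"
  shows "eigenvalue (gossip_mat m P) l"
  unfolding eigenvalue_def eigenvector_def
proof (intro exI[of _ "vec m y"] conjI)
  have "gossip_mat m P *\<^sub>v vec m y = vec m (mix m P y)"
    by (rule eq_vecI) (auto simp: gossip_mat_def mix_def scalar_prod_def atLeast0LessThan)
  then show "gossip_mat m P *\<^sub>v vec m y = l \<cdot>\<^sub>v vec m y"
    using assms(1) by (auto intro!: eq_vecI)
  have "vec m y $ k \<noteq> 0\<^sub>v m $ k" using assms(2,3) by simp
  then show "vec m y \<noteq> 0\<^sub>v (dim_row (gossip_mat m P))" by (auto simp: gossip_mat_def)
qed (simp_all add: gossip_mat_def)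

lemma finite_nontrivial_eigenvalue_moduli:
  "finite {\<bar>l\<bar> | l. eigenvalue (gossip_mat m P) l \<and> l \<noteq> 1}"
proof -
  have "{\<bar>l\<bar> | l. eigenvalue (gossip_mat m P) l \<and> l \<noteq> 1} \<subseteq> abs ` spectrum (gossip_mat m P)"
    unfolding spectrum_def by auto
  then show ?thesis
    using card_finite_spectrum(1)[OF gossip_mat_carrier] finite_subset by blast
qed

lemma abs_eigenvalue_le_one_minus_spectral_gap:
  assumes "eigenvalue (gossip_mat m P) l" and "l \<noteq> 1"
  shows "\<bar>l\<bar> \<le> 1 - spectral_gap m P"
  unfolding spectral_gap_def using assms finite_nontrivial_eigenvalue_moduli
  by (auto intro!: Max_ge)

lemma spectral_gap_le_1: "spectral_gap m P \<le> 1"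
  unfolding spectral_gap_def using finite_nontrivial_eigenvalue_moduli by simp

locale gossip =
  fixes m :: nat and P :: "nat \<Rightarrow> nat \<Rightarrow> real"
  assumes gossip_matrix: "gossip_matrix m P"
begin

lemma symmetric: "i < m \<Longrightarrow> j < m \<Longrightarrow> P i j = P j i"
  using gossip_matrix unfolding gossip_matrix_def by blast

lemma row_sum: "i < m \<Longrightarrow> (\<Sum>j<m. P i j) = 1"
  using gossip_matrix unfolding gossip_matrix_def by blast

lemma column_sum: "j < m \<Longrightarrow> (\<Sum>i<m. P i j) = 1"
proof -
  assume j: "j < m"
  have "(\<Sum>i<m. P i j) = (\<Sum>i<m. P j i)" using j by (intro sum.cong) (simp_all add: symmetric)
  then show ?thesis using row_sum[OF j] by simp
qed

lemma spectral_gap_pos: "0 < spectral_gap m P"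
proof -
  have "Max (insert 0 {\<bar>l\<bar> | l. eigenvalue (gossip_mat m P) l \<and> l \<noteq> 1}) < 1"
    using gossip_matrix finite_nontrivial_eigenvalue_moduli unfolding gossip_matrix_def
    by (subst Max_less_iff) auto
  then show ?thesis unfolding spectral_gap_def by simp
qed

lemma fixed_point_const:
  fixes u :: "nat \<Rightarrow> real"
  assumes fixed: "\<forall>k<m. mix m P u k = u k" and i: "i < m" and j: "j < m"
  shows "u i = u j"
proof (rule ccontr)
  assume ne: "u i \<noteq> u j"
  define A where "A = map_mat complex_of_real (gossip_mat m P)"
  have A: "A \<in> carrier_mat m m" unfolding A_def using gossip_mat_carrier by simp
  have fixed_vec: "vec m (\<lambda>k. complex_of_real (v k)) \<in> mat_kernel (char_matrix A 1)"
    if "\<forall>k<m. mix m P v k = v k" for v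
  proof -
    have "A *\<^sub>v vec m (\<lambda>k. complex_of_real (v k)) = 1 \<cdot>\<^sub>v vec m (\<lambda>k. complex_of_real (v k))"
      unfolding A_def gossip_mat_mult_vec using that by (auto intro!: eq_vecI)
    then show ?thesis using mat_kernel_char_matrix_iff[OF A] by simp
  qed
  have "\<forall>k<m. mix m P (\<lambda>_. 1::real) k = 1" by (auto simp: mix_real row_sum)
  from two_le_kernel_dim[OF char_matrix_closed[OF A] fixed_vec[OF this] fixed_vec[OF fixed] i j]
  have "2 \<le> kernel_dim (char_matrix A 1)" using ne i j by simp
  also have "\<dots> \<le> Polynomial.order 1 (char_poly A)" by (rule kernel_dim_char_matrix_le_order[OF A])
  also have "\<dots> = 1"
    using order_char_poly_map_of_real[OF gossip_mat_carrier, of 1 m P] gossip_matrix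
    unfolding A_def gossip_matrix_def by simp
  finally show False by simp
qed

end

section \<open>Spectral contraction on the sum-zero subspace\<close>

lemma mix_add: "mix m P (\<lambda>j. a j + b j) i = mix m P a i + mix m P b i"
  by (simp add: mix_def scaleR_add_right sum.distrib)

lemma mix_cong: "(\<And>j. j < m \<Longrightarrow> a j = b j) \<Longrightarrow> mix m P a = mix m P b"
  by (simp add: mix_def)

lemma mix_add_scale:
  fixes a b :: "nat \<Rightarrow> real"
  shows "mix m P (\<lambda>j. a j + e * b j) i = mix m P a i + e * mix m P b i"
  by (simp add: mix_real sum.distrib sum_distrib_left algebra_simps)

lemma mix_scale:
  fixes a :: "nat \<Rightarrow> real"
  shows "mix m P (\<lambda>j. c * a j) = (\<lambda>i. c * mix m P a i)"
  by (rule ext) (simp add: mix_real sum_distrib_left algebra_simps)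

definition sum_sq :: "nat \<Rightarrow> (nat \<Rightarrow> real) \<Rightarrow> real" where
  "sum_sq m v = (\<Sum>i<m. (v i)\<^sup>2)"

lemma sum_sq_nonneg: "0 \<le> sum_sq m v"
  by (simp add: sum_sq_def sum_nonneg)

lemma sum_sq_eq_0_iff: "sum_sq m v = 0 \<longleftrightarrow> (\<forall>i<m. v i = 0)"
  by (auto simp: sum_sq_def sum_nonneg_eq_0_iff)

lemma sum_sq_cong: "(\<And>j. j < m \<Longrightarrow> a j = b j) \<Longrightarrow> sum_sq m a = sum_sq m b"
  by (simp add: sum_sq_def)

lemma sum_sq_scale: "sum_sq m (\<lambda>i. c * v i) = c\<^sup>2 * sum_sq m v"
  by (simp add: sum_sq_def power_mult_distrib sum_distrib_left)

lemma sum_sq_add_scale: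
  "sum_sq m (\<lambda>i. a i + e * b i) = sum_sq m a + 2 * e * (\<Sum>i<m. a i * b i) + e\<^sup>2 * sum_sq m b"
  by (simp add: sum_sq_def power2_eq_square algebra_simps sum.distrib sum_distrib_left)

lemma abs_le_one_if_sum_sq_eq_1: "sum_sq m v = 1 \<Longrightarrow> i < m \<Longrightarrow> \<bar>v i\<bar> \<le> 1"
proof -
  assume "sum_sq m v = 1" and "i < m"
  then have "(v i)\<^sup>2 \<le> 1"
    unfolding sum_sq_def by (metis finite_lessThan lessThan_iff member_le_sum zero_le_power2)
  then show ?thesis by (simp add: abs_square_le_1)
qed

lemma quadratic_nonpos_imp_linear_coeff_zero:
  fixes a b :: real
  assumes nonpos: "\<And>e. a * e + b * e\<^sup>2 \<le> 0"
  shows "a = 0"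
proof (rule ccontr)
  assume "a \<noteq> 0"
  define c where "c = \<bar>b\<bar> + 1"
  have c: "0 < c" "0 < c + b" unfolding c_def by linarith+
  have "a * (a / c) + b * (a / c)\<^sup>2 = a\<^sup>2 * (c + b) / c\<^sup>2"
    using c by (simp add: field_simps power2_eq_square)
  also have "\<dots> > 0" using \<open>a \<noteq> 0\<close> c by simp
  finally show False using nonpos[of "a / c"] by simp
qed

text \<open>Compactness is used in the product topology on \<^typ>\<open>nat \<Rightarrow> real\<close>, so the
  unit sum-zero vectors are taken to vanish outside \<open>{..<m}\<close>.\<close>

definition unit_sum_zero :: "nat \<Rightarrow> (nat \<Rightarrow> real) set" where
  "unit_sum_zero m = Pi\<^sub>E UNIV (\<lambda>i. if i < m then {-1..1} else {0})
     \<inter> {u. (\<Sum>i<m. u i) = 0} \<inter> {u. sum_sq m u = 1}"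

lemma compact_unit_sum_zero: "compact (unit_sum_zero m)"
proof -
  have "compactin (product_topology (\<lambda>_. euclidean) UNIV)
      (Pi\<^sub>E UNIV (\<lambda>i. if i < m then {-1..1::real} else {0}))"
    by (subst compactin_PiE) (auto simp: compactin_euclidean_iff)
  then have "compact (Pi\<^sub>E UNIV (\<lambda>i. if i < m then {-1..1::real} else {0}))"
    by (simp add: euclidean_product_topology compactin_euclidean_iff)
  moreover have "closed {u::nat \<Rightarrow> real. (\<Sum>i<m. u i) = 0}" "closed {u. sum_sq m u = 1}"
    unfolding sum_sq_def
    by (intro closed_Collect_eq continuous_on_sum continuous_on_power continuous_on_const
        continuous_on_product_coordinates)+
  ultimately show ?thesis unfolding unit_sum_zero_def by (intro compact_Int_closed)
qed

lemma normalise_into_unit_sum_zero: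
  assumes u0: "(\<Sum>i<m. u i) = 0" and u: "sum_sq m u \<noteq> 0"
  obtains w where "w \<in> unit_sum_zero m"
    and "sum_sq m (mix m P u) = sum_sq m u * sum_sq m (mix m P w)"
proof
  define w where "w i = (if i < m then u i / sqrt (sum_sq m u) else 0)" for i
  have q: "0 < sum_sq m u" using u sum_sq_nonneg[of m u] by linarith
  have on_m: "w i = (1 / sqrt (sum_sq m u)) * u i" if "i < m" for i
    using that by (simp add: w_def)
  have "sum_sq m w = (1 / sqrt (sum_sq m u))\<^sup>2 * sum_sq m u"
    by (simp only: sum_sq_cong[OF on_m] sum_sq_scale)
  then have w1: "sum_sq m w = 1" using q by (simp add: power_divide)
  moreover have "(\<Sum>i<m. w i) = 0"
    using u0 by (simp add: on_m sum_divide_distrib[symmetric])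
  moreover have "w \<in> Pi\<^sub>E UNIV (\<lambda>i. if i < m then {-1..1} else {0})"
  proof (rule PiE_I)
    fix i
    show "w i \<in> (if i < m then {-1..1} else {0})"
      using abs_le_one_if_sum_sq_eq_1[OF w1, of i]
      by (cases "i < m") (simp add: abs_le_iff, simp add: w_def)
  qed simp
  ultimately show "w \<in> unit_sum_zero m" unfolding unit_sum_zero_def by blast
  have "sum_sq m (mix m P w) = (1 / sqrt (sum_sq m u))\<^sup>2 * sum_sq m (mix m P u)"
    by (simp only: mix_cong[OF on_m] mix_scale sum_sq_scale)
  then show "sum_sq m (mix m P u) = sum_sq m u * sum_sq m (mix m P w)"
    using q by (simp add: power_divide)
qed

lemma sum_sq_mix_maximiser_exists:
  assumes v0: "(\<Sum>i<m. v i) = 0" and v: "sum_sq m v \<noteq> 0"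
  obtains vs where "(\<Sum>i<m. vs i) = 0" and "sum_sq m vs = 1"
    and "\<And>u. (\<Sum>i<m. u i) = 0 \<Longrightarrow> sum_sq m (mix m P u) \<le> sum_sq m (mix m P vs) * sum_sq m u"
proof -
  define F where "F u = sum_sq m (mix m P u)" for u
  have "continuous_on UNIV F"
    unfolding F_def sum_sq_def mix_real
    by (intro continuous_on_sum continuous_on_power continuous_on_mult continuous_on_const
        continuous_on_product_coordinates)
  then have "continuous_on (unit_sum_zero m) F" by (rule continuous_on_subset) simp
  moreover have "unit_sum_zero m \<noteq> {}" using normalise_into_unit_sum_zero[OF v0 v] by blast
  ultimately obtain vs where vs: "vs \<in> unit_sum_zero m"
    and max: "\<And>u. u \<in> unit_sum_zero m \<Longrightarrow> F u \<le> F vs"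
    using continuous_attains_sup[OF compact_unit_sum_zero] by blast
  show thesis
  proof (rule that)
    show "(\<Sum>i<m. vs i) = 0" "sum_sq m vs = 1" using vs unfolding unit_sum_zero_def by auto
    fix u :: "nat \<Rightarrow> real" assume u0: "(\<Sum>i<m. u i) = 0"
    have "F u \<le> F vs * sum_sq m u"
    proof (cases "sum_sq m u = 0")
      case True
      then show ?thesis unfolding F_def sum_sq_eq_0_iff by (simp add: mix_def sum_sq_def)
    next
      case False
      then obtain w where w: "w \<in> unit_sum_zero m" and Fu: "F u = sum_sq m u * F w"
        using normalise_into_unit_sum_zero[OF u0] unfolding F_def by blast
      show ?thesis
        unfolding Fu using max[OF w] sum_sq_nonneg[of m u] by (metis mult.commute mult_right_mono)
    qed
    then show "sum_sq m (mix m P u) \<le> sum_sq m (mix m P vs) * sum_sq m u" unfolding F_def .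
  qed
qed

context gossip
begin

lemma sum_mix: "(\<Sum>i<m. mix m P u i) = (\<Sum>j<m. u j)"
proof -
  have "(\<Sum>i<m. mix m P u i) = (\<Sum>j<m. (\<Sum>i<m. P i j) *\<^sub>R u j)"
    unfolding mix_def by (subst sum.swap) (simp add: scaleR_sum_left)
  also have "\<dots> = (\<Sum>j<m. u j)" by (simp add: column_sum)
  finally show ?thesis .
qed

lemma sum_mix_mult_commute:
  fixes a b :: "nat \<Rightarrow> real"
  shows "(\<Sum>i<m. mix m P a i * b i) = (\<Sum>i<m. a i * mix m P b i)"
proof -
  have "(\<Sum>i<m. mix m P a i * b i) = (\<Sum>i<m. \<Sum>j<m. P i j * a j * b i)"
    by (simp add: mix_real sum_distrib_right)
  also have "\<dots> = (\<Sum>j<m. \<Sum>i<m. P j i * a j * b i)"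
    by (subst sum.swap) (auto intro!: sum.cong simp: symmetric)
  also have "\<dots> = (\<Sum>j<m. a j * mix m P b j)"
    by (simp add: mix_real sum_distrib_left ac_simps)
  finally show ?thesis .
qed

lemma fixed_point_sum_zero:
  fixes u :: "nat \<Rightarrow> real"
  assumes "\<forall>k<m. mix m P u k = u k" and "(\<Sum>k<m. u k) = 0" and "i < m"
  shows "u i = 0"
proof -
  have "(\<Sum>k<m. u k) = real m * u i" using fixed_point_const[OF assms(1) _ assms(3)] by simp
  then show ?thesis using assms(2,3) by simp
qed

text \<open>First-order condition at a maximiser of the Rayleigh quotient of \<open>P\<^sup>2\<close> on
  the sum-zero subspace: the residual \<open>r\<close> is orthogonal to every admissible direction,
  in particular to itself.\<close>

lemma maximiser_eigenvector:
  assumes vs0: "(\<Sum>i<m. vs i) = 0" and vs1: "sum_sq m vs = 1"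
    and max: "\<And>u. (\<Sum>i<m. u i) = 0 \<Longrightarrow> sum_sq m (mix m P u) \<le> \<mu> * sum_sq m u"
    and \<mu>: "\<mu> = sum_sq m (mix m P vs)"
    and i: "i < m"
  shows "mix m P (mix m P vs) i = \<mu> * vs i"
proof -
  define r where "r i = mix m P (mix m P vs) i - \<mu> * vs i" for i
  define A where "A = (\<Sum>i<m. mix m P vs i * mix m P r i)"
  define B where "B = (\<Sum>i<m. vs i * r i)"
  have r0: "(\<Sum>i<m. r i) = 0"
    unfolding r_def by (simp add: sum_subtractf sum_mix vs0 sum_distrib_left[symmetric])
  have "A - \<mu> * B = (\<Sum>i<m. (mix m P (mix m P vs) i - \<mu> * vs i) * r i)"
    unfolding A_def B_def sum_mix_mult_commute[of "mix m P vs", symmetric]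
    by (simp add: sum_distrib_left sum_subtractf left_diff_distrib mult.assoc)
  also have "\<dots> = sum_sq m r" by (simp add: r_def sum_sq_def power2_eq_square)
  finally have AB: "sum_sq m r = A - \<mu> * B" ..
  have "2 * sum_sq m r * e + (sum_sq m (mix m P r) - \<mu> * sum_sq m r) * e\<^sup>2 \<le> 0" for e
  proof -
    have "(\<Sum>i<m. vs i + e * r i) = 0"
      using vs0 r0 by (simp add: sum.distrib sum_distrib_left[symmetric])
    from max[OF this]
    have "\<mu> + 2 * e * A + e\<^sup>2 * sum_sq m (mix m P r) \<le> \<mu> * (1 + 2 * e * B + e\<^sup>2 * sum_sq m r)"
      unfolding mix_add_scale sum_sq_add_scale vs1 \<mu>[symmetric] A_def B_def .
    then show ?thesis unfolding AB by (simp add: algebra_simps)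
  qed
  then have "2 * sum_sq m r = 0" by (rule quadratic_nonpos_imp_linear_coeff_zero)
  then have "sum_sq m r = 0" by simp
  then show ?thesis using i unfolding sum_sq_eq_0_iff r_def by simp
qed

lemma sqrt_le_one_minus_spectral_gap:
  assumes eig: "\<forall>i<m. mix m P (mix m P v) i = \<mu> * v i" and v0: "(\<Sum>i<m. v i) = 0"
    and k: "k < m" "v k \<noteq> 0" and \<mu>: "0 \<le> \<mu>"
  shows "sqrt \<mu> \<le> 1 - spectral_gap m P"
proof -
  define s where "s = sqrt \<mu>"
  define y where "y i = mix m P v i + s * v i" for i
  have s: "0 \<le> s" "s * s = \<mu>" unfolding s_def using \<mu> by simp_all
  have y_eig: "\<forall>i<m. mix m P y i = s * y i"
    using eig s unfolding y_def mix_add mix_scale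
    by (simp add: algebra_simps)
  show ?thesis
  proof (cases "\<exists>j<m. y j \<noteq> 0")
    case True
    then obtain j where j: "j < m" "y j \<noteq> 0" by blast
    have "(\<Sum>i<m. y i) = 0" unfolding y_def
      by (simp add: sum.distrib sum_mix v0 sum_distrib_left[symmetric])
    then have "s \<noteq> 1" using fixed_point_sum_zero[of y, OF _ _ j(1)] y_eig j by auto
    then have "\<bar>s\<bar> \<le> 1 - spectral_gap m P"
      by (intro abs_eigenvalue_le_one_minus_spectral_gap eigenvalue_gossip_matI[OF y_eig j])
    then show ?thesis using s unfolding s_def by simp
  next
    case False
    then have "\<forall>i<m. mix m P v i = (- s) * v i" unfolding y_def by (auto simp: add_eq_0_iff)
    then have "eigenvalue (gossip_mat m P) (- s)" using k by (rule eigenvalue_gossip_matI)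
    then have "\<bar>- s\<bar> \<le> 1 - spectral_gap m P" using s
      by (intro abs_eigenvalue_le_one_minus_spectral_gap) auto
    then show ?thesis using s unfolding s_def by simp
  qed
qed

lemma sum_sq_mix_le:
  assumes v0: "(\<Sum>i<m. v i) = 0"
  shows "sum_sq m (mix m P v) \<le> (1 - spectral_gap m P)\<^sup>2 * sum_sq m v"
proof (cases "sum_sq m v = 0")
  case True
  then show ?thesis unfolding sum_sq_eq_0_iff by (simp add: mix_def sum_sq_def)
next
  case False
  then obtain vs where vs0: "(\<Sum>i<m. vs i) = 0" and vs1: "sum_sq m vs = 1"
    and max: "\<And>u. (\<Sum>i<m. u i) = 0 \<Longrightarrow> sum_sq m (mix m P u) \<le> sum_sq m (mix m P vs) * sum_sq m u"
    using sum_sq_mix_maximiser_exists[OF v0] by blast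
  define \<mu> where "\<mu> = sum_sq m (mix m P vs)"
  obtain k where k: "k < m" "vs k \<noteq> 0" using vs1 sum_sq_eq_0_iff[of m vs] by auto
  have "\<forall>i<m. mix m P (mix m P vs) i = \<mu> * vs i"
    using maximiser_eigenvector[OF vs0 vs1 max[folded \<mu>_def] \<mu>_def] by blast
  from sqrt_le_one_minus_spectral_gap[OF this vs0 k]
  have "sqrt \<mu> \<le> 1 - spectral_gap m P" unfolding \<mu>_def using sum_sq_nonneg by blast
  then have "(sqrt \<mu>)\<^sup>2 \<le> (1 - spectral_gap m P)\<^sup>2"
    by (rule power_mono) (simp add: \<mu>_def sum_sq_nonneg)
  then have "\<mu> \<le> (1 - spectral_gap m P)\<^sup>2" using sum_sq_nonneg unfolding \<mu>_def by simp
  then show ?thesis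
    using max[OF v0] sum_sq_nonneg[of m v] unfolding \<mu>_def[symmetric]
    by (meson mult_right_mono order_trans)
qed

end

section \<open>Consensus distance\<close>

definition avg :: "nat \<Rightarrow> (nat \<Rightarrow> 'a::real_vector) \<Rightarrow> 'a" where
  "avg m u = (1 / real m) *\<^sub>R (\<Sum>j<m. u j)"

definition consensus_dist :: "nat \<Rightarrow> (nat \<Rightarrow> 'a::real_normed_vector) \<Rightarrow> real" where
  "consensus_dist m u = (\<Sum>i<m. (norm (u i - avg m u))\<^sup>2)"

lemma consensus_dist_nonneg: "0 \<le> consensus_dist m u"
  by (simp add: consensus_dist_def sum_nonneg)

lemma sum_diff_avg: "(\<Sum>i<m. u i - avg m u) = 0"
  by (cases "m = 0") (simp_all add: avg_def sum_subtractf sum_constant_scaleR)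

lemma avg_add: "avg m (\<lambda>i. a i + b i) = avg m a + avg m b"
  by (simp add: avg_def sum.distrib scaleR_add_right)

lemma avg_diff: "avg m (\<lambda>i. a i - b i) = avg m a - avg m b"
  by (simp add: avg_def sum_subtractf scaleR_diff_right)

lemma avg_scaleR: "avg m (\<lambda>i. c *\<^sub>R a i) = c *\<^sub>R avg m a"
  by (simp add: avg_def scaleR_sum_right)

lemma avg_inner: "avg m u \<bullet> b = avg m (\<lambda>i. u i \<bullet> b)"
  by (simp add: avg_def inner_sum_left)

lemma consensus_dist_const: "consensus_dist m (\<lambda>_. c) = 0"
  by (cases "m = 0") (simp_all add: consensus_dist_def avg_def sum_constant_scaleR)

lemma consensus_dist_scaleR: "consensus_dist m (\<lambda>i. c *\<^sub>R u i) = c\<^sup>2 * consensus_dist m u"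
  by (simp add: consensus_dist_def avg_scaleR scaleR_diff_right[symmetric] power_mult_distrib
      sum_distrib_left)

lemma consensus_dist_real: "consensus_dist m v = sum_sq m (\<lambda>i. v i - avg m v)"
  by (simp add: consensus_dist_def sum_sq_def)

lemma consensus_dist_eq_sum_Basis:
  fixes u :: "nat \<Rightarrow> 'a::euclidean_space"
  shows "consensus_dist m u = (\<Sum>b\<in>Basis. consensus_dist m (\<lambda>i. u i \<bullet> b))"
proof -
  have norm_sq: "(norm v)\<^sup>2 = (\<Sum>b\<in>Basis. (v \<bullet> b)\<^sup>2)" for v :: 'a
    unfolding power2_norm_eq_inner euclidean_inner[of v v] by (simp add: power2_eq_square)
  show ?thesis
    unfolding consensus_dist_def avg_inner[symmetric] norm_sq
    by (subst sum.swap) (simp add: inner_diff_left)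
qed

lemma consensus_dist_le_sum_sq_dist:
  fixes u :: "nat \<Rightarrow> 'a::real_inner"
  shows "consensus_dist m u \<le> (\<Sum>i<m. (norm (u i - c))\<^sup>2)"
proof -
  have "(norm (u i - c))\<^sup>2
      = (norm (u i - avg m u))\<^sup>2 + 2 * ((u i - avg m u) \<bullet> (avg m u - c)) + (norm (avg m u - c))\<^sup>2"
    for i
    using dot_norm[of "u i - avg m u" "avg m u - c"] by simp
  then have "(\<Sum>i<m. (norm (u i - c))\<^sup>2) = consensus_dist m u
      + 2 * ((\<Sum>i<m. u i - avg m u) \<bullet> (avg m u - c)) + real m * (norm (avg m u - c))\<^sup>2"
    by (simp add: consensus_dist_def sum.distrib inner_sum_left sum_distrib_left)
  then show ?thesis by (simp add: sum_diff_avg)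
qed

lemma norm_add_sq_le:
  fixes x y :: "'a::real_inner"
  assumes c: "0 < c"
  shows "(norm (x + y))\<^sup>2 \<le> (1 + c) * (norm x)\<^sup>2 + (1 + 1 / c) * (norm y)\<^sup>2"
proof -
  have "2 * (x \<bullet> y) \<le> 2 * (norm x * norm y)"
    using Cauchy_Schwarz_ineq2[of x y] by simp
  also have "\<dots> \<le> c * (norm x)\<^sup>2 + (norm y)\<^sup>2 / c"
  proof -
    have "0 \<le> (c * norm x - norm y)\<^sup>2 / c" using c by simp
    also have "\<dots> = c * (norm x)\<^sup>2 + (norm y)\<^sup>2 / c - 2 * (norm x * norm y)"
      using c by (simp add: power2_eq_square field_simps)
    finally show ?thesis by simp
  qed
  finally show ?thesis
    by (simp add: power2_norm_eq_inner inner_add_left inner_add_right inner_commute algebra_simps)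
qed

lemma norm_add3_sq_le:
  fixes x y z :: "'a::real_inner"
  shows "(norm (x + y + z))\<^sup>2 \<le> 3 * ((norm x)\<^sup>2 + (norm y)\<^sup>2 + (norm z)\<^sup>2)"
  using norm_add_sq_le[of "1/2" "x + y" z] norm_add_sq_le[of 1 x y] by simp

lemma consensus_dist_add_le:
  fixes a b :: "nat \<Rightarrow> 'a::real_inner"
  assumes "0 < c"
  shows "consensus_dist m (\<lambda>i. a i + b i)
           \<le> (1 + c) * consensus_dist m a + (1 + 1 / c) * consensus_dist m b"
proof -
  have "consensus_dist m (\<lambda>i. a i + b i) = (\<Sum>i<m. (norm ((a i - avg m a) + (b i - avg m b)))\<^sup>2)"
    by (simp add: consensus_dist_def avg_add algebra_simps)
  also have "\<dots> \<le> (\<Sum>i<m. (1 + c) * (norm (a i - avg m a))\<^sup>2 + (1 + 1 / c) * (norm (b i - avg m b))\<^sup>2)"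
    by (intro sum_mono norm_add_sq_le assms)
  also have "\<dots> = (1 + c) * consensus_dist m a + (1 + 1 / c) * consensus_dist m b"
    by (simp add: consensus_dist_def sum.distrib sum_distrib_left)
  finally show ?thesis .
qed

lemma norm_avg_sq_le: "(norm (avg m u))\<^sup>2 \<le> (\<Sum>i<m. (norm (u i))\<^sup>2) / real m"
proof -
  have "(norm (\<Sum>i<m. u i))\<^sup>2 \<le> (\<Sum>i<m. 1 * norm (u i))\<^sup>2"
    by (simp add: norm_sum power_mono)
  also have "\<dots> \<le> (\<Sum>i<m. 1\<^sup>2) * (\<Sum>i<m. (norm (u i))\<^sup>2)" by (rule Cauchy_Schwarz_ineq_sum)
  finally have "(norm (\<Sum>i<m. u i))\<^sup>2 \<le> real m * (\<Sum>i<m. (norm (u i))\<^sup>2)" by simp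
  then show ?thesis
    by (cases "m = 0") (simp_all add: avg_def power_divide power2_eq_square field_simps)
qed

lemma gap_young_coeffs:
  fixes \<rho> A B :: real
  assumes \<rho>: "0 < \<rho>" "\<rho> \<le> 1" and AB: "0 \<le> A" "0 \<le> B"
  shows "(1 - \<rho>)\<^sup>2 * ((1 + \<rho>) * A + (1 + 1 / \<rho>) * B) \<le> (1 - \<rho>) * A + B / \<rho>"
proof -
  have a: "(1 - \<rho>)\<^sup>2 * (1 + \<rho>) \<le> 1 - \<rho>"
  proof -
    have "(1 - \<rho>)\<^sup>2 * (1 + \<rho>) = (1 - \<rho>) * (1 - \<rho>\<^sup>2)" by (simp add: power2_eq_square algebra_simps)
    also have "\<dots> \<le> 1 - \<rho>" using \<rho> by (simp add: mult_left_le)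
    finally show ?thesis .
  qed
  have "(1 - \<rho>)\<^sup>2 * (1 + 1 / \<rho>) = (1 - \<rho>)\<^sup>2 * (1 + \<rho>) / \<rho>" using \<rho> by (simp add: field_simps)
  also have "\<dots> \<le> 1 / \<rho>" using a \<rho> by (simp add: divide_right_mono)
  finally have b: "(1 - \<rho>)\<^sup>2 * (1 + 1 / \<rho>) \<le> 1 / \<rho>" .
  have "(1 - \<rho>)\<^sup>2 * ((1 + \<rho>) * A + (1 + 1 / \<rho>) * B)
      = ((1 - \<rho>)\<^sup>2 * (1 + \<rho>)) * A + ((1 - \<rho>)\<^sup>2 * (1 + 1 / \<rho>)) * B"
    by (simp add: algebra_simps)
  also have "\<dots> \<le> (1 - \<rho>) * A + (1 / \<rho>) * B"
    using a b AB by (intro add_mono mult_right_mono)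
  finally show ?thesis by simp
qed

lemma mix_inner: "(\<lambda>i. mix m P u i \<bullet> b) = mix m P (\<lambda>j. u j \<bullet> b)"
  by (simp add: mix_def inner_sum_left fun_eq_iff)

context gossip
begin

lemma avg_mix: "avg m (mix m P u) = avg m u"
  by (simp add: avg_def sum_mix)

lemma mix_diff_const: "i < m \<Longrightarrow> mix m P u i - c = mix m P (\<lambda>j. u j - c) i"
  by (simp add: mix_def scaleR_diff_right sum_subtractf scaleR_sum_left[symmetric] row_sum)

lemma consensus_dist_mix_le_real:
  fixes v :: "nat \<Rightarrow> real"
  shows "consensus_dist m (mix m P v) \<le> (1 - spectral_gap m P)\<^sup>2 * consensus_dist m v"
proof -
  have "consensus_dist m (mix m P v) = sum_sq m (mix m P (\<lambda>j. v j - avg m v))"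
    unfolding consensus_dist_real avg_mix by (rule sum_sq_cong) (simp add: mix_diff_const)
  also have "\<dots> \<le> (1 - spectral_gap m P)\<^sup>2 * consensus_dist m v"
    unfolding consensus_dist_real by (rule sum_sq_mix_le) (rule sum_diff_avg)
  finally show ?thesis .
qed

lemma consensus_dist_mix_le:
  fixes u :: "nat \<Rightarrow> 'a::euclidean_space"
  shows "consensus_dist m (mix m P u) \<le> (1 - spectral_gap m P)\<^sup>2 * consensus_dist m u"
proof -
  have "consensus_dist m (mix m P u) = (\<Sum>b\<in>Basis. consensus_dist m (mix m P (\<lambda>j. u j \<bullet> b)))"
    by (simp add: consensus_dist_eq_sum_Basis[of m "mix m P u"] mix_inner)
  also have "\<dots> \<le> (\<Sum>b\<in>Basis. (1 - spectral_gap m P)\<^sup>2 * consensus_dist m (\<lambda>j. u j \<bullet> b))"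
    by (intro sum_mono consensus_dist_mix_le_real)
  also have "\<dots> = (1 - spectral_gap m P)\<^sup>2 * consensus_dist m u"
    by (simp add: consensus_dist_eq_sum_Basis[of m u] sum_distrib_left)
  finally show ?thesis .
qed

text \<open>Young's inequality with parameter \<open>\<rho>\<close> is exactly absorbed by the contraction
  factor \<open>(1 - \<rho>)\<^sup>2\<close> of one gossip step.\<close>

lemma consensus_dist_mix_add_le:
  fixes a b :: "nat \<Rightarrow> 'a::euclidean_space"
  shows "consensus_dist m (mix m P (\<lambda>i. a i + b i))
           \<le> (1 - spectral_gap m P) * consensus_dist m a + consensus_dist m b / spectral_gap m P"
proof -
  let ?\<rho> = "spectral_gap m P"
  have "consensus_dist m (mix m P (\<lambda>i. a i + b i)) \<le> (1 - ?\<rho>)\<^sup>2 * consensus_dist m (\<lambda>i. a i + b i)"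
    by (rule consensus_dist_mix_le)
  also have "\<dots> \<le> (1 - ?\<rho>)\<^sup>2 * ((1 + ?\<rho>) * consensus_dist m a + (1 + 1 / ?\<rho>) * consensus_dist m b)"
    by (intro mult_left_mono consensus_dist_add_le spectral_gap_pos) simp
  also have "\<dots> \<le> (1 - ?\<rho>) * consensus_dist m a + consensus_dist m b / ?\<rho>"
    by (intro gap_young_coeffs spectral_gap_pos spectral_gap_le_1 consensus_dist_nonneg)
  finally show ?thesis .
qed

end

lemma consensus_x_round_coeffs:
  fixes \<rho> \<delta> X W D E :: real
  assumes \<rho>: "0 < \<rho>" "\<rho> \<le> 1" and \<delta>: "0 \<le> \<delta>" "\<delta> \<le> 1"
    and nonneg: "0 \<le> X" "0 \<le> W" "0 \<le> D" "0 \<le> E"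
  shows "(1 - \<rho>) * ((1 - \<delta>)\<^sup>2 * X) + \<delta>\<^sup>2 * ((1 + \<rho>) * W + (1 + 1 / \<rho>) * (E * D)) / \<rho>
           \<le> (1 - \<rho>) * X + 2 * (\<delta>\<^sup>2 / \<rho> * W + \<delta>\<^sup>2 * E / \<rho>\<^sup>2 * D)"
proof -
  have "(1 - \<rho>) * ((1 - \<delta>)\<^sup>2 * X) \<le> (1 - \<rho>) * X"
    using \<rho> \<delta> nonneg by (intro mult_left_mono mult_left_le_one_le) (simp_all add: power_le_one)
  moreover have "\<delta>\<^sup>2 * ((1 + \<rho>) * W + (1 + 1 / \<rho>) * (E * D)) / \<rho>
      = (1 + \<rho>) * (\<delta>\<^sup>2 / \<rho> * W + \<delta>\<^sup>2 * E / \<rho>\<^sup>2 * D)"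
    using \<rho> by (simp add: field_simps power2_eq_square)
  moreover have "(1 + \<rho>) * (\<delta>\<^sup>2 / \<rho> * W + \<delta>\<^sup>2 * E / \<rho>\<^sup>2 * D) \<le> 2 * (\<delta>\<^sup>2 / \<rho> * W + \<delta>\<^sup>2 * E / \<rho>\<^sup>2 * D)"
    using \<rho> nonneg by (intro mult_right_mono) simp_all
  ultimately show ?thesis by linarith
qed

lemma fst_dat_round:
  "fst (dat_round m P G \<eta> \<alpha> t zt (w, x)) = mix m P (\<lambda>i. w i - (\<eta> * \<alpha> t) *\<^sub>R G i (x i) (zt i))"
  by (simp add: dat_round_def mix_def)

lemma snd_dat_round:
  "snd (dat_round m P G \<eta> \<alpha> t zt (w, x)) = mix m P (\<lambda>i.
     (1 - \<alpha> t / (\<Sum>s=1..t. \<alpha> s)) *\<^sub>R x i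
     + (\<alpha> t / (\<Sum>s=1..t. \<alpha> s)) *\<^sub>R (w i - (\<eta> * \<alpha> t) *\<^sub>R G i (x i) (zt i)))"
  by (simp add: dat_round_def mix_def)

context gossip
begin

lemma consensus_dist_dat_round_fst:
  fixes w x :: "nat \<Rightarrow> 'a::euclidean_space"
  shows "consensus_dist m (fst (dat_round m P G \<eta> \<alpha> t zt (w, x)))
           \<le> (1 - spectral_gap m P) * consensus_dist m w
             + (\<eta> * \<alpha> t)\<^sup>2 / spectral_gap m P * consensus_dist m (\<lambda>i. G i (x i) (zt i))"
  using consensus_dist_mix_add_le[of w "\<lambda>i. (- (\<eta> * \<alpha> t)) *\<^sub>R G i (x i) (zt i)"]
  unfolding consensus_dist_scaleR fst_dat_round by simp

lemma consensus_dist_dat_round_snd: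
  fixes w x :: "nat \<Rightarrow> 'a::euclidean_space" and \<alpha> :: "nat \<Rightarrow> real" and t :: nat
  defines "\<delta> \<equiv> \<alpha> t / (\<Sum>s=1..t. \<alpha> s)"
  assumes \<delta>: "0 \<le> \<delta>" "\<delta> \<le> 1"
  shows "consensus_dist m (snd (dat_round m P G \<eta> \<alpha> t zt (w, x)))
           \<le> (1 - spectral_gap m P) * consensus_dist m x
             + 2 * \<delta>\<^sup>2 / spectral_gap m P * consensus_dist m w
             + 2 * (\<delta> * \<eta> * \<alpha> t)\<^sup>2 / (spectral_gap m P)\<^sup>2 * consensus_dist m (\<lambda>i. G i (x i) (zt i))"
proof -
  let ?\<rho> = "spectral_gap m P"
  define g where "g = (\<lambda>i. G i (x i) (zt i))"
  define wh where "wh = (\<lambda>i. w i - (\<eta> * \<alpha> t) *\<^sub>R g i)"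
  define E where "E = (\<eta> * \<alpha> t)\<^sup>2"
  have \<rho>: "0 < ?\<rho>" "?\<rho> \<le> 1" by (rule spectral_gap_pos, rule spectral_gap_le_1)
  have wh: "consensus_dist m wh
      \<le> (1 + ?\<rho>) * consensus_dist m w + (1 + 1 / ?\<rho>) * (E * consensus_dist m g)"
    using consensus_dist_add_le[OF \<rho>(1), of m w "\<lambda>i. (- (\<eta> * \<alpha> t)) *\<^sub>R g i"]
    unfolding consensus_dist_scaleR by (simp add: wh_def E_def)
  have "consensus_dist m (snd (dat_round m P G \<eta> \<alpha> t zt (w, x)))
      \<le> (1 - ?\<rho>) * consensus_dist m (\<lambda>i. (1 - \<delta>) *\<^sub>R x i) + consensus_dist m (\<lambda>i. \<delta> *\<^sub>R wh i) / ?\<rho>"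
    unfolding snd_dat_round \<delta>_def[symmetric] wh_def g_def by (rule consensus_dist_mix_add_le)
  also have "\<dots> = (1 - ?\<rho>) * ((1 - \<delta>)\<^sup>2 * consensus_dist m x) + \<delta>\<^sup>2 * consensus_dist m wh / ?\<rho>"
    by (simp add: consensus_dist_scaleR)
  also have "\<dots> \<le> (1 - ?\<rho>) * ((1 - \<delta>)\<^sup>2 * consensus_dist m x)
      + \<delta>\<^sup>2 * ((1 + ?\<rho>) * consensus_dist m w + (1 + 1 / ?\<rho>) * (E * consensus_dist m g)) / ?\<rho>"
    using \<rho> wh by (intro add_left_mono divide_right_mono mult_left_mono) simp_all
  also have "\<dots> \<le> (1 - ?\<rho>) * consensus_dist m x
      + 2 * (\<delta>\<^sup>2 / ?\<rho> * consensus_dist m w + \<delta>\<^sup>2 * E / ?\<rho>\<^sup>2 * consensus_dist m g)"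
    using \<rho> \<delta> by (rule consensus_x_round_coeffs) (simp_all add: consensus_dist_nonneg E_def)
  finally show ?thesis by (simp add: E_def g_def power_mult_distrib algebra_simps)
qed

end

lemma linear_weight_ratio:
  assumes "1 \<le> t"
  shows "real t / (\<Sum>s=1..t. real s) = 2 / (real t + 1)"
proof -
  have sum_eq: "(\<Sum>s=1..t. real s) = real t * (real t + 1) / 2"
    by (induction t) (simp_all add: field_simps)
  have "0 < real t * (real t + 1)" using assms by simp
  then show ?thesis unfolding sum_eq by (simp add: field_simps)
qed

lemma sum_sq_lipschitz_le:
  fixes x :: "nat \<Rightarrow> 'a::real_normed_vector" and gf :: "nat \<Rightarrow> 'a \<Rightarrow> 'b::real_normed_vector"
  assumes smooth: "\<And>i y z. i < m \<Longrightarrow> norm (gf i y - gf i z) \<le> L * norm (y - z)"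
  shows "(\<Sum>i<m. (norm (gf i (x i) - gf i c))\<^sup>2) \<le> L\<^sup>2 * (\<Sum>i<m. (norm (x i - c))\<^sup>2)"
  unfolding sum_distrib_left power_mult_distrib[symmetric]
  by (intro sum_mono power_mono smooth) simp_all

lemma consensus_dist_stoch_grad_le:
  fixes g x :: "nat \<Rightarrow> 'a::real_inner" and gf :: "nat \<Rightarrow> 'a \<Rightarrow> 'a"
  assumes smooth: "\<And>i y z. i < m \<Longrightarrow> norm (gf i y - gf i z) \<le> L * norm (y - z)"
    and hetero: "consensus_dist m (\<lambda>i. gf i (avg m x)) \<le> real m * \<zeta>\<^sup>2"
  shows "consensus_dist m g
           \<le> 3 * (\<Sum>i<m. (norm (g i - gf i (x i)))\<^sup>2) + 3 * L\<^sup>2 * consensus_dist m x + 3 * real m * \<zeta>\<^sup>2"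
proof -
  define xb where "xb = avg m x"
  define c where "c = avg m (\<lambda>i. gf i xb)"
  have "consensus_dist m g \<le> (\<Sum>i<m. (norm (g i - c))\<^sup>2)" by (rule consensus_dist_le_sum_sq_dist)
  also have "\<dots> \<le> (\<Sum>i<m. 3 * ((norm (g i - gf i (x i)))\<^sup>2 + (norm (gf i (x i) - gf i xb))\<^sup>2
      + (norm (gf i xb - c))\<^sup>2))"
  proof (rule sum_mono)
    fix i
    have "g i - c = (g i - gf i (x i)) + (gf i (x i) - gf i xb) + (gf i xb - c)" by simp
    then show "(norm (g i - c))\<^sup>2 \<le> 3 * ((norm (g i - gf i (x i)))\<^sup>2
        + (norm (gf i (x i) - gf i xb))\<^sup>2 + (norm (gf i xb - c))\<^sup>2)"
      by (metis norm_add3_sq_le)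
  qed
  also have "\<dots> = 3 * (\<Sum>i<m. (norm (g i - gf i (x i)))\<^sup>2) + 3 * (\<Sum>i<m. (norm (gf i (x i) - gf i xb))\<^sup>2)
      + 3 * consensus_dist m (\<lambda>i. gf i xb)"
    by (simp add: consensus_dist_def c_def sum.distrib sum_distrib_left algebra_simps)
  also have "\<dots> \<le> 3 * (\<Sum>i<m. (norm (g i - gf i (x i)))\<^sup>2) + 3 * (L\<^sup>2 * consensus_dist m x)
      + 3 * (real m * \<zeta>\<^sup>2)"
    using sum_sq_lipschitz_le[OF smooth, where x = x and c = xb] hetero
    unfolding xb_def consensus_dist_def by (intro add_mono) simp_all
  finally show ?thesis by simp
qed

lemma gradient_gap_le:
  fixes x :: "nat \<Rightarrow> 'a::real_normed_vector" and gf :: "nat \<Rightarrow> 'a \<Rightarrow> 'b::real_normed_vector"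
  assumes smooth: "\<And>i y z. i < m \<Longrightarrow> norm (gf i y - gf i z) \<le> L * norm (y - z)"
  shows "(norm (avg m (\<lambda>i. gf i (x i)) - avg m (\<lambda>i. gf i (avg m x))))\<^sup>2
           \<le> L\<^sup>2 / real m * consensus_dist m x"
proof -
  have "(norm (avg m (\<lambda>i. gf i (x i)) - avg m (\<lambda>i. gf i (avg m x))))\<^sup>2
      \<le> (\<Sum>i<m. (norm (gf i (x i) - gf i (avg m x)))\<^sup>2) / real m"
    unfolding avg_diff[symmetric] by (rule norm_avg_sq_le)
  also have "\<dots> \<le> L\<^sup>2 * consensus_dist m x / real m"
    unfolding consensus_dist_def by (intro divide_right_mono sum_sq_lipschitz_le smooth) simp_all
  finally show ?thesis by simp
qed

section \<open>Measurability, independence and expectations\<close>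

lemma borel_measurable_consensus_dist:
  fixes u :: "'a \<Rightarrow> nat \<Rightarrow> 'b::euclidean_space"
  assumes "\<And>i. i < m \<Longrightarrow> (\<lambda>\<omega>. u \<omega> i) \<in> borel_measurable M"
  shows "(\<lambda>\<omega>. consensus_dist m (u \<omega>)) \<in> borel_measurable M"
  unfolding consensus_dist_def avg_def using assms
  by (intro borel_measurable_sum borel_measurable_power borel_measurable_norm borel_measurable_diff
      borel_measurable_scaleR borel_measurable_const) auto

lemma dat_state_cong:
  assumes "\<And>s j. 1 \<le> s \<Longrightarrow> s \<le> n \<Longrightarrow> j < m \<Longrightarrow> z s j = z' s j"
  shows "\<forall>i<m. fst (dat_state m P G \<eta> \<alpha> w1 z n) i = fst (dat_state m P G \<eta> \<alpha> w1 z' n) i \<and>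
               snd (dat_state m P G \<eta> \<alpha> w1 z n) i = snd (dat_state m P G \<eta> \<alpha> w1 z' n) i"
  using assms
proof (induction n)
  case (Suc n)
  then have "\<forall>i<m. fst (dat_state m P G \<eta> \<alpha> w1 z n) i = fst (dat_state m P G \<eta> \<alpha> w1 z' n) i \<and>
               snd (dat_state m P G \<eta> \<alpha> w1 z n) i = snd (dat_state m P G \<eta> \<alpha> w1 z' n) i"
    by simp
  then show ?case using Suc.prems by (auto simp: dat_round_def Let_def intro!: sum.cong)
qed simp

lemma measurable_dat_state:
  fixes G :: "nat \<Rightarrow> 'a::euclidean_space \<Rightarrow> 'z \<Rightarrow> 'a"
  assumes G: "\<And>i. i < m \<Longrightarrow> (\<lambda>(x, z). G i x z) \<in> borel_measurable (borel \<Otimes>\<^sub>M D i)"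
    and z: "\<And>s j. 1 \<le> s \<Longrightarrow> s \<le> n \<Longrightarrow> j < m \<Longrightarrow> (\<lambda>\<omega>. z \<omega> s j) \<in> measurable M (D j)"
  shows "\<forall>i<m. (\<lambda>\<omega>. fst (dat_state m P G \<eta> \<alpha> w1 (z \<omega>) n) i) \<in> borel_measurable M \<and>
               (\<lambda>\<omega>. snd (dat_state m P G \<eta> \<alpha> w1 (z \<omega>) n) i) \<in> borel_measurable M"
  using z
proof (induction n)
  case (Suc n)
  then have IH: "\<forall>i<m. (\<lambda>\<omega>. fst (dat_state m P G \<eta> \<alpha> w1 (z \<omega>) n) i) \<in> borel_measurable M \<and>
               (\<lambda>\<omega>. snd (dat_state m P G \<eta> \<alpha> w1 (z \<omega>) n) i) \<in> borel_measurable M"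
    by simp
  have "(\<lambda>\<omega>. G j (snd (dat_state m P G \<eta> \<alpha> w1 (z \<omega>) n) j) (z \<omega> (Suc n) j)) \<in> borel_measurable M"
    if j: "j < m" for j
    using measurable_compose[OF measurable_Pair G[OF j]] IH j Suc.prems[of "Suc n" j] by auto
  with IH show ?case
    by (auto simp: dat_round_def Let_def intro!: borel_measurable_sum borel_measurable_scaleR
        borel_measurable_diff borel_measurable_add)
qed simp

lemma (in prob_space) nn_integral_indep_var_le:
  assumes indep: "indep_var S X T Y" and h: "h \<in> borel_measurable (S \<Otimes>\<^sub>M T)"
    and bound: "\<And>s. s \<in> space S \<Longrightarrow> (\<integral>\<^sup>+y. h (s, y) \<partial>distr M T Y) \<le> c"
  shows "(\<integral>\<^sup>+\<omega>. h (X \<omega>, Y \<omega>) \<partial>M) \<le> c"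
proof -
  have X: "random_variable S X" and Y: "random_variable T Y"
    using indep by (rule indep_var_rv1, rule indep_var_rv2)
  have prod: "distr M S X \<Otimes>\<^sub>M distr M T Y = distr M (S \<Otimes>\<^sub>M T) (\<lambda>\<omega>. (X \<omega>, Y \<omega>))"
    using indep_var_distribution_eq[THEN iffD1, OF indep] by (elim conjE)
  interpret X: prob_space "distr M S X" by (rule prob_space_distr[OF X])
  interpret Y: prob_space "distr M T Y" by (rule prob_space_distr[OF Y])
  have XY: "(\<lambda>\<omega>. (X \<omega>, Y \<omega>)) \<in> measurable M (S \<Otimes>\<^sub>M T)"
    using X Y by (rule measurable_Pair)
  have sets: "sets (distr M S X \<Otimes>\<^sub>M distr M T Y) = sets (S \<Otimes>\<^sub>M T)"
    by (rule sets_pair_measure_cong) simp_all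
  have h': "h \<in> borel_measurable (distr M S X \<Otimes>\<^sub>M distr M T Y)"
    using h unfolding measurable_cong_sets[OF sets refl] .
  have "(\<integral>\<^sup>+\<omega>. h (X \<omega>, Y \<omega>) \<partial>M) = integral\<^sup>N (distr M (S \<Otimes>\<^sub>M T) (\<lambda>\<omega>. (X \<omega>, Y \<omega>))) h"
    using nn_integral_distr[OF XY, of h] h by simp
  also have "\<dots> = (\<integral>\<^sup>+s. \<integral>\<^sup>+y. h (s, y) \<partial>distr M T Y \<partial>distr M S X)"
    unfolding prod[symmetric] by (rule Y.nn_integral_fst[OF h', symmetric])
  also have "\<dots> \<le> (\<integral>\<^sup>+s. c \<partial>distr M S X)"
    by (rule nn_integral_mono) (simp only: space_distr bound)
  also have "\<dots> = c" using X.emeasure_space_1 by simp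
  finally show ?thesis .
qed

lemma (in prob_space) nn_integral_indep_var_comp_le:
  assumes indep: "indep_var S X T Y" and f: "f \<in> measurable S S'" and g: "g \<in> measurable T T'"
    and h: "h \<in> borel_measurable (S' \<Otimes>\<^sub>M T')"
    and bound: "\<And>s. s \<in> space S' \<Longrightarrow> (\<integral>\<^sup>+y. h (s, y) \<partial>distr M T' (\<lambda>\<omega>. g (Y \<omega>))) \<le> c"
  shows "(\<integral>\<^sup>+\<omega>. h (f (X \<omega>), g (Y \<omega>)) \<partial>M) \<le> c"
proof (rule nn_integral_indep_var_le[OF indep,
      where h = "\<lambda>p. h (f (fst p), g (snd p))", simplified])
  show "(\<lambda>p. h (f (fst p), g (snd p))) \<in> borel_measurable (S \<Otimes>\<^sub>M T)"
    using f g h by measurable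
  have Y: "random_variable T Y" using indep by (rule indep_var_rv2)
  fix s assume "s \<in> space S"
  then have "f s \<in> space S'" using f by (simp add: measurable_space)
  have hs: "(\<lambda>y. h (f s, y)) \<in> borel_measurable T'" using h \<open>f s \<in> space S'\<close> by measurable
  have "(\<integral>\<^sup>+y. h (f s, g y) \<partial>distr M T Y) = (\<integral>\<^sup>+\<omega>. h (f s, g (Y \<omega>)) \<partial>M)"
    using Y measurable_compose[OF g hs] by (intro nn_integral_distr) simp_all
  also have "\<dots> = (\<integral>\<^sup>+y. h (f s, y) \<partial>distr M T' (\<lambda>\<omega>. g (Y \<omega>)))"
    using measurable_compose[OF Y g] hs by (intro nn_integral_distr[symmetric]) simp_all
  also have "\<dots> \<le> c" using \<open>f s \<in> space S'\<close> by (rule bound)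
  finally show "(\<integral>\<^sup>+y. h (f s, g y) \<partial>distr M T Y) \<le> c" .
qed

lemma (in prob_space) nn_integral_recursion_le:
  fixes h X W N :: "'a \<Rightarrow> real"
  assumes meas: "X \<in> borel_measurable M" "W \<in> borel_measurable M" "N \<in> borel_measurable M"
    and nonneg: "\<And>\<omega>. 0 \<le> X \<omega>" "\<And>\<omega>. 0 \<le> W \<omega>" "\<And>\<omega>. 0 \<le> N \<omega>"
      "0 \<le> a1" "0 \<le> a2" "0 \<le> c" "0 \<le> b" "0 \<le> d" "0 \<le> x" "0 \<le> w" "0 \<le> n"
    and bounds: "(\<integral>\<^sup>+\<omega>. X \<omega> \<partial>M) \<le> ennreal x" "(\<integral>\<^sup>+\<omega>. W \<omega> \<partial>M) \<le> ennreal w"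
      "(\<integral>\<^sup>+\<omega>. N \<omega> \<partial>M) \<le> ennreal n"
    and h: "\<And>\<omega>. h \<omega> \<le> a1 * X \<omega> + a2 * W \<omega> + c * (N \<omega> + b * X \<omega> + d)"
  shows "(\<integral>\<^sup>+\<omega>. h \<omega> \<partial>M) \<le> ennreal (a1 * x + a2 * w + c * (n + b * x + d))"
proof -
  have "(\<integral>\<^sup>+\<omega>. h \<omega> \<partial>M)
      \<le> (\<integral>\<^sup>+\<omega>. ennreal (a1 + c * b) * X \<omega> + ennreal a2 * W \<omega> + ennreal c * N \<omega> + ennreal (c * d) \<partial>M)"
    using nonneg h
    by (intro nn_integral_mono)
      (simp add: ennreal_plus[symmetric] ennreal_mult[symmetric] algebra_simps del: ennreal_plus)
  also have "\<dots> = ennreal (a1 + c * b) * (\<integral>\<^sup>+\<omega>. X \<omega> \<partial>M) + ennreal a2 * (\<integral>\<^sup>+\<omega>. W \<omega> \<partial>M)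
      + ennreal c * (\<integral>\<^sup>+\<omega>. N \<omega> \<partial>M) + ennreal (c * d)"
    using meas by (simp add: nn_integral_add nn_integral_cmult emeasure_space_1)
  also have "\<dots> \<le> ennreal (a1 + c * b) * x + ennreal a2 * w + ennreal c * n + ennreal (c * d)"
    by (intro add_mono mult_left_mono bounds order_refl) simp_all
  also have "\<dots> = ennreal (a1 * x + a2 * w + c * (n + b * x + d))"
    using nonneg
    by (simp add: ennreal_plus[symmetric] ennreal_mult[symmetric] algebra_simps del: ennreal_plus)
  finally show ?thesis .
qed

lemma sum_ennreal_mult_le:
  fixes I :: "nat \<Rightarrow> ennreal" and w :: "nat \<Rightarrow> real"
  assumes "\<And>\<tau>. \<tau> \<in> A \<Longrightarrow> I \<tau> \<le> ennreal K" and "0 \<le> K" and "\<And>\<tau>. 0 \<le> w \<tau>"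
  shows "(\<Sum>\<tau>\<in>A. ennreal (w \<tau>) * I \<tau>) \<le> ennreal (K * (\<Sum>\<tau>\<in>A. w \<tau>))"
proof -
  have "(\<Sum>\<tau>\<in>A. ennreal (w \<tau>) * I \<tau>) \<le> (\<Sum>\<tau>\<in>A. ennreal (K * w \<tau>))"
  proof (rule sum_mono)
    fix \<tau> assume "\<tau> \<in> A"
    then have "ennreal (w \<tau>) * I \<tau> \<le> ennreal (w \<tau>) * ennreal K"
      using assms(1) by (intro mult_left_mono) simp_all
    then show "ennreal (w \<tau>) * I \<tau> \<le> ennreal (K * w \<tau>)"
      using assms(2,3) by (simp add: ennreal_mult mult.commute)
  qed
  also have "\<dots> = ennreal (K * (\<Sum>\<tau>\<in>A. w \<tau>))"
    using assms by (simp add: sum_ennreal sum_distrib_left)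
  finally show ?thesis .
qed

text \<open>The constants \<open>9\<close> and \<open>2560\<close> are chosen so that, under the step-size condition,
  the error terms are absorbed by the contraction \<open>1 - \<rho>\<close>.\<close>

lemma consensus_w_bound_step:
  fixes \<rho> \<eta> L \<sigma> \<zeta> t M :: real
  assumes \<rho>: "0 < \<rho>" "\<rho> \<le> 1" and t: "0 \<le> t" and M: "0 \<le> M"
    and step: "5120 * \<eta>\<^sup>2 * L\<^sup>2 \<le> \<rho> ^ 4"
  defines "S \<equiv> M * (2 * \<sigma>\<^sup>2 + \<zeta>\<^sup>2) * \<eta>\<^sup>2"
  shows "(1 - \<rho>) * (9 * t\<^sup>2 * S / \<rho>\<^sup>2)
           + 3 * (\<eta> * t)\<^sup>2 / \<rho> * (M * \<sigma>\<^sup>2 + L\<^sup>2 * (2560 * S / \<rho> ^ 4) + M * \<zeta>\<^sup>2)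
         \<le> 9 * (t + 1)\<^sup>2 * S / \<rho>\<^sup>2"
proof -
  define u where "u = t\<^sup>2 * S / \<rho>"
  have S: "0 \<le> S" unfolding S_def using M by simp
  have u: "0 \<le> u" unfolding u_def using S \<rho> by simp
  have "3 * (\<eta> * t)\<^sup>2 / \<rho> * (M * \<sigma>\<^sup>2 + M * \<zeta>\<^sup>2) \<le> 3 * (\<eta> * t)\<^sup>2 / \<rho> * (M * (2 * \<sigma>\<^sup>2 + \<zeta>\<^sup>2))"
    using \<rho> M by (intro mult_left_mono) (simp_all add: algebra_simps)
  also have "\<dots> = 3 * u" unfolding u_def S_def by (simp add: field_simps power_mult_distrib)
  finally have noise: "3 * (\<eta> * t)\<^sup>2 / \<rho> * (M * \<sigma>\<^sup>2 + M * \<zeta>\<^sup>2) \<le> 3 * u" .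
  have "3 * (\<eta> * t)\<^sup>2 / \<rho> * (L\<^sup>2 * (2560 * S / \<rho> ^ 4)) = (5120 * \<eta>\<^sup>2 * L\<^sup>2) * (3 / 2 * t\<^sup>2 * S / \<rho> ^ 5)"
    by (simp add: field_simps eval_nat_numeral power_mult_distrib)
  also have "\<dots> \<le> \<rho> ^ 4 * (3 / 2 * t\<^sup>2 * S / \<rho> ^ 5)"
    using step S \<rho> by (intro mult_right_mono) simp_all
  also have "\<dots> = 3 / 2 * u" unfolding u_def using \<rho> by (simp add: field_simps eval_nat_numeral)
  finally have drift: "3 * (\<eta> * t)\<^sup>2 / \<rho> * (L\<^sup>2 * (2560 * S / \<rho> ^ 4)) \<le> 3 / 2 * u" .
  have contraction: "(1 - \<rho>) * (9 * t\<^sup>2 * S / \<rho>\<^sup>2) = 9 * t\<^sup>2 * S / \<rho>\<^sup>2 - 9 * u"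
    unfolding u_def using \<rho> by (simp add: field_simps power2_eq_square)
  have "9 * t\<^sup>2 * S / \<rho>\<^sup>2 \<le> 9 * (t + 1)\<^sup>2 * S / \<rho>\<^sup>2"
    using S t by (intro divide_right_mono mult_right_mono mult_left_mono power_mono) simp_all
  moreover have "3 * (\<eta> * t)\<^sup>2 / \<rho> * (M * \<sigma>\<^sup>2 + L\<^sup>2 * (2560 * S / \<rho> ^ 4) + M * \<zeta>\<^sup>2)
      = 3 * (\<eta> * t)\<^sup>2 / \<rho> * (M * \<sigma>\<^sup>2 + M * \<zeta>\<^sup>2) + 3 * (\<eta> * t)\<^sup>2 / \<rho> * (L\<^sup>2 * (2560 * S / \<rho> ^ 4))"
    by (simp only: distrib_left add_ac)
  ultimately show ?thesis using noise drift contraction u by linarith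
qed

lemma consensus_x_bound_step:
  fixes \<rho> \<eta> L \<sigma> \<zeta> t M :: real
  assumes \<rho>: "0 < \<rho>" "\<rho> \<le> 1" and t: "0 \<le> t" and M: "0 \<le> M"
    and step: "5120 * \<eta>\<^sup>2 * L\<^sup>2 \<le> \<rho> ^ 4"
  defines "S \<equiv> M * (2 * \<sigma>\<^sup>2 + \<zeta>\<^sup>2) * \<eta>\<^sup>2"
  shows "(1 - \<rho>) * (2560 * S / \<rho> ^ 4) + 8 / (\<rho> * (t + 1)\<^sup>2) * (9 * t\<^sup>2 * S / \<rho>\<^sup>2)
           + 24 * \<eta>\<^sup>2 / \<rho>\<^sup>2 * (M * \<sigma>\<^sup>2 + L\<^sup>2 * (2560 * S / \<rho> ^ 4) + M * \<zeta>\<^sup>2)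
         \<le> 2560 * S / \<rho> ^ 4"
proof -
  define v where "v = S / \<rho> ^ 3"
  have S: "0 \<le> S" unfolding S_def using M by simp
  have v: "0 \<le> v" unfolding v_def using S \<rho> by simp
  have S_le_v: "S / \<rho>\<^sup>2 \<le> v"
  proof -
    have "S / \<rho>\<^sup>2 = v * \<rho>" unfolding v_def using \<rho> by (simp add: field_simps eval_nat_numeral)
    also have "\<dots> \<le> v" using v \<rho> by (simp add: mult_left_le)
    finally show ?thesis .
  qed
  have "24 * \<eta>\<^sup>2 / \<rho>\<^sup>2 * (M * \<sigma>\<^sup>2 + M * \<zeta>\<^sup>2) \<le> 24 * \<eta>\<^sup>2 / \<rho>\<^sup>2 * (M * (2 * \<sigma>\<^sup>2 + \<zeta>\<^sup>2))"
    using \<rho> M by (intro mult_left_mono) (simp_all add: algebra_simps)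
  also have "\<dots> = 24 * (S / \<rho>\<^sup>2)" unfolding S_def by (simp add: field_simps)
  finally have noise: "24 * \<eta>\<^sup>2 / \<rho>\<^sup>2 * (M * \<sigma>\<^sup>2 + M * \<zeta>\<^sup>2) \<le> 24 * v" using S_le_v by linarith
  have "24 * \<eta>\<^sup>2 / \<rho>\<^sup>2 * (L\<^sup>2 * (2560 * S / \<rho> ^ 4)) = (5120 * \<eta>\<^sup>2 * L\<^sup>2) * (12 * S / \<rho> ^ 6)"
    by (simp add: field_simps eval_nat_numeral)
  also have "\<dots> \<le> \<rho> ^ 4 * (12 * S / \<rho> ^ 6)"
    using step S \<rho> by (intro mult_right_mono) simp_all
  also have "\<dots> = 12 * (S / \<rho>\<^sup>2)" using \<rho> by (simp add: field_simps eval_nat_numeral)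
  finally have drift: "24 * \<eta>\<^sup>2 / \<rho>\<^sup>2 * (L\<^sup>2 * (2560 * S / \<rho> ^ 4)) \<le> 12 * v" using S_le_v by linarith
  have "8 / (\<rho> * (t + 1)\<^sup>2) * (9 * t\<^sup>2 * S / \<rho>\<^sup>2) = 72 * (t\<^sup>2 / (t + 1)\<^sup>2) * v"
    unfolding v_def using \<rho> t by (simp add: field_simps eval_nat_numeral)
  also have "\<dots> \<le> 72 * 1 * v"
    using t v by (intro mult_right_mono mult_left_mono) (simp_all add: power_mono)
  finally have w_term: "8 / (\<rho> * (t + 1)\<^sup>2) * (9 * t\<^sup>2 * S / \<rho>\<^sup>2) \<le> 72 * v" by simp
  have contraction: "(1 - \<rho>) * (2560 * S / \<rho> ^ 4) = 2560 * S / \<rho> ^ 4 - 2560 * v"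
    unfolding v_def using \<rho> by (simp add: field_simps eval_nat_numeral)
  have "24 * \<eta>\<^sup>2 / \<rho>\<^sup>2 * (M * \<sigma>\<^sup>2 + L\<^sup>2 * (2560 * S / \<rho> ^ 4) + M * \<zeta>\<^sup>2)
      = 24 * \<eta>\<^sup>2 / \<rho>\<^sup>2 * (M * \<sigma>\<^sup>2 + M * \<zeta>\<^sup>2) + 24 * \<eta>\<^sup>2 / \<rho>\<^sup>2 * (L\<^sup>2 * (2560 * S / \<rho> ^ 4))"
    by (simp only: distrib_left add_ac)
  then show ?thesis using noise drift w_term contraction v by linarith
qed

locale dat_sgd = gossip m P + prob_space \<Omega>
  for m :: nat and P :: "nat \<Rightarrow> nat \<Rightarrow> real" and \<Omega> :: "'w measure" +
  fixes D :: "nat \<Rightarrow> 'z measure"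
    and G :: "nat \<Rightarrow> 'a::euclidean_space \<Rightarrow> 'z \<Rightarrow> 'a"
    and gf :: "nat \<Rightarrow> 'a \<Rightarrow> 'a"
    and Z :: "nat \<Rightarrow> nat \<Rightarrow> 'w \<Rightarrow> 'z"
    and L \<sigma> \<zeta> \<eta> :: real
    and w1 :: 'a
  assumes m_pos: "1 \<le> m"
    and G_meas: "\<And>i. i < m \<Longrightarrow> (\<lambda>(x, z). G i x z) \<in> borel_measurable (borel \<Otimes>\<^sub>M D i)"
    and L_nonneg: "0 \<le> L"
    and smooth: "\<And>i x y. i < m \<Longrightarrow> norm (gf i x - gf i y) \<le> L * norm (x - y)"
    and variance: "\<And>i x. i < m \<Longrightarrow>
      (\<integral>\<^sup>+z. ennreal ((norm (G i x z - gf i x))\<^sup>2) \<partial>D i) \<le> ennreal (\<sigma>\<^sup>2)"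
    and hetero: "\<And>x. consensus_dist m (\<lambda>i. gf i x) \<le> real m * \<zeta>\<^sup>2"
    and Z_indep: "indep_vars (\<lambda>(t, i). D i) (\<lambda>(t, i). Z t i) ({1..} \<times> {..<m})"
    and Z_distr: "\<And>t i. 1 \<le> t \<Longrightarrow> i < m \<Longrightarrow> distr \<Omega> (D i) (Z t i) = D i"
    and step_size: "5120 * \<eta>\<^sup>2 * L\<^sup>2 \<le> spectral_gap m P ^ 4"
begin

abbreviation \<rho> :: real where "\<rho> \<equiv> spectral_gap m P"

definition iter_w :: "nat \<Rightarrow> 'w \<Rightarrow> nat \<Rightarrow> 'a" where
  "iter_w t \<omega> = fst (dat_state m P G \<eta> real w1 (\<lambda>s j. Z s j \<omega>) (t - 1))"

definition iter_x :: "nat \<Rightarrow> 'w \<Rightarrow> nat \<Rightarrow> 'a" where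
  "iter_x t \<omega> = dat_x m P G \<eta> real w1 (\<lambda>s j. Z s j \<omega>) t"

definition noise :: "nat \<Rightarrow> 'w \<Rightarrow> real" where
  "noise t \<omega> = (\<Sum>i<m. (norm (G i (iter_x t \<omega> i) (Z t i \<omega>) - gf i (iter_x t \<omega> i)))\<^sup>2)"

definition noise_scale :: real where
  "noise_scale = real m * (2 * \<sigma>\<^sup>2 + \<zeta>\<^sup>2) * \<eta>\<^sup>2"

lemma iter_x_eq: "iter_x t \<omega> = snd (dat_state m P G \<eta> real w1 (\<lambda>s j. Z s j \<omega>) (t - 1))"
  by (rule ext) (simp add: iter_x_def dat_x_def)

lemma iter_1: "iter_w 1 \<omega> = (\<lambda>_. w1)" "iter_x 1 \<omega> = (\<lambda>_. w1)"
  by (simp_all add: iter_w_def iter_x_eq)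

lemma iter_Suc:
  assumes "1 \<le> t"
  shows "iter_w (Suc t) \<omega> = fst (dat_round m P G \<eta> real t (\<lambda>i. Z t i \<omega>) (iter_w t \<omega>, iter_x t \<omega>))"
    and "iter_x (Suc t) \<omega> = snd (dat_round m P G \<eta> real t (\<lambda>i. Z t i \<omega>) (iter_w t \<omega>, iter_x t \<omega>))"
  using assms by (cases t; simp add: iter_w_def iter_x_eq)+

lemma measurable_sample: "1 \<le> t \<Longrightarrow> i < m \<Longrightarrow> Z t i \<in> measurable \<Omega> (D i)"
  using Z_indep unfolding indep_vars_def by auto

lemma measurable_iter:
  assumes "i < m"
  shows "(\<lambda>\<omega>. iter_w t \<omega> i) \<in> borel_measurable \<Omega>" and "(\<lambda>\<omega>. iter_x t \<omega> i) \<in> borel_measurable \<Omega>"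
proof -
  have "\<forall>i<m. (\<lambda>\<omega>. fst (dat_state m P G \<eta> real w1 (\<lambda>s j. Z s j \<omega>) (t - 1)) i) \<in> borel_measurable \<Omega> \<and>
      (\<lambda>\<omega>. snd (dat_state m P G \<eta> real w1 (\<lambda>s j. Z s j \<omega>) (t - 1)) i) \<in> borel_measurable \<Omega>"
    by (rule measurable_dat_state[OF G_meas]) (simp_all add: measurable_sample)
  then show "(\<lambda>\<omega>. iter_w t \<omega> i) \<in> borel_measurable \<Omega>" "(\<lambda>\<omega>. iter_x t \<omega> i) \<in> borel_measurable \<Omega>"
    using assms by (simp_all add: iter_w_def iter_x_eq)
qed

lemma measurable_gf: "i < m \<Longrightarrow> gf i \<in> borel_measurable borel"
  using smooth L_nonneg
  by (intro borel_measurable_continuous_onI lipschitz_on_continuous_on[where L = L] lipschitz_onI)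
    (simp_all add: dist_norm)

lemma measurable_noise_term:
  assumes "1 \<le> t" and "i < m"
  shows "(\<lambda>\<omega>. (norm (G i (iter_x t \<omega> i) (Z t i \<omega>) - gf i (iter_x t \<omega> i)))\<^sup>2) \<in> borel_measurable \<Omega>"
proof -
  have "(\<lambda>\<omega>. (iter_x t \<omega> i, Z t i \<omega>)) \<in> measurable \<Omega> (borel \<Otimes>\<^sub>M D i)"
    using assms by (intro measurable_Pair measurable_iter(2) measurable_sample)
  from measurable_compose[OF this G_meas[OF assms(2)]]
  have "(\<lambda>\<omega>. G i (iter_x t \<omega> i) (Z t i \<omega>)) \<in> borel_measurable \<Omega>" by simp
  moreover have "(\<lambda>\<omega>. gf i (iter_x t \<omega> i)) \<in> borel_measurable \<Omega>"
    using measurable_compose[OF measurable_iter(2) measurable_gf] assms(2) by simp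
  ultimately show ?thesis by measurable
qed

lemma iter_x_measurable_past:
  assumes i: "i < m"
  obtains \<Phi> where "\<Phi> \<in> borel_measurable (PiM ({1..<t} \<times> {..<m}) (\<lambda>(s, j). D j))"
    and "\<And>\<omega>. iter_x t \<omega> i = \<Phi> (restrict (\<lambda>(s, j). Z s j \<omega>) ({1..<t} \<times> {..<m}))"
proof
  define \<Phi> where "\<Phi> f = snd (dat_state m P G \<eta> real w1 (\<lambda>s j. f (s, j)) (t - 1)) i" for f
  have "(\<lambda>f. f (s, j)) \<in> measurable (PiM ({1..<t} \<times> {..<m}) (\<lambda>(s, j). D j)) (D j)"
    if "1 \<le> s" "s \<le> t - 1" "j < m" for s j
    using measurable_component_singleton[of "(s, j)" "{1..<t} \<times> {..<m}" "\<lambda>(s, j). D j"] that by auto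
  then have "\<forall>k<m. (\<lambda>f. fst (dat_state m P G \<eta> real w1 (\<lambda>s j. f (s, j)) (t - 1)) k)
        \<in> borel_measurable (PiM ({1..<t} \<times> {..<m}) (\<lambda>(s, j). D j))
      \<and> (\<lambda>f. snd (dat_state m P G \<eta> real w1 (\<lambda>s j. f (s, j)) (t - 1)) k)
        \<in> borel_measurable (PiM ({1..<t} \<times> {..<m}) (\<lambda>(s, j). D j))"
    by (intro measurable_dat_state[OF G_meas]) simp_all
  then show "\<Phi> \<in> borel_measurable (PiM ({1..<t} \<times> {..<m}) (\<lambda>(s, j). D j))"
    unfolding \<Phi>_def using i by blast
  fix \<omega>
  let ?z = "\<lambda>s j. restrict (\<lambda>(s, j). Z s j \<omega>) ({1..<t} \<times> {..<m}) (s, j)"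
  have "\<forall>k<m. fst (dat_state m P G \<eta> real w1 (\<lambda>s j. Z s j \<omega>) (t - 1)) k
        = fst (dat_state m P G \<eta> real w1 ?z (t - 1)) k
      \<and> snd (dat_state m P G \<eta> real w1 (\<lambda>s j. Z s j \<omega>) (t - 1)) k
        = snd (dat_state m P G \<eta> real w1 ?z (t - 1)) k"
    by (rule dat_state_cong) auto
  then show "iter_x t \<omega> i = \<Phi> (restrict (\<lambda>(s, j). Z s j \<omega>) ({1..<t} \<times> {..<m}))"
    using i by (simp add: \<Phi>_def iter_x_eq)
qed

lemma nn_integral_noise_term_le:
  assumes t: "1 \<le> t" and i: "i < m"
  shows "(\<integral>\<^sup>+\<omega>. (norm (G i (iter_x t \<omega> i) (Z t i \<omega>) - gf i (iter_x t \<omega> i)))\<^sup>2 \<partial>\<Omega>) \<le> \<sigma>\<^sup>2"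
proof -
  define M' where "M' = (\<lambda>(s::nat, j::nat). D j)"
  define restr where "restr B \<omega> = restrict (\<lambda>(s, j). Z s j \<omega>) B" for B \<omega>
  define A where "A = {1..<t} \<times> {..<m}"
  obtain \<Phi> where \<Phi>: "\<Phi> \<in> borel_measurable (PiM A M')"
    and past: "\<And>\<omega>. iter_x t \<omega> i = \<Phi> (restr A \<omega>)"
    using iter_x_measurable_past[OF i] unfolding M'_def restr_def A_def by blast
  have indep: "indep_var (PiM A M') (restr A) (PiM {(t, i)} M') (restr {(t, i)})"
    unfolding restr_def M'_def A_def using Z_indep t i
    by (intro indep_var_restrict[where I = "{1..} \<times> {..<m}"]) (auto simp: case_prod_beta')
  have eval: "(\<lambda>f. f (t, i)) \<in> measurable (PiM {(t, i)} M') (D i)"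
    using measurable_component_singleton[of "(t, i)" "{(t, i)}" M'] unfolding M'_def by simp
  have "(\<integral>\<^sup>+\<omega>. ennreal ((norm (G i (\<Phi> (restr A \<omega>)) (restr {(t, i)} \<omega> (t, i))
      - gf i (\<Phi> (restr A \<omega>))))\<^sup>2) \<partial>\<Omega>) \<le> \<sigma>\<^sup>2"
  proof (rule nn_integral_indep_var_comp_le[OF indep \<Phi> eval,
        where h = "\<lambda>(x, z). ennreal ((norm (G i x z - gf i x))\<^sup>2)", simplified])
    show "(\<lambda>(x, z). ennreal ((norm (G i x z - gf i x))\<^sup>2)) \<in> borel_measurable (borel \<Otimes>\<^sub>M D i)"
      using G_meas[OF i] measurable_compose[OF measurable_fst measurable_gf[OF i]] by measurable
    have "distr \<Omega> (D i) (\<lambda>\<omega>. restr {(t, i)} \<omega> (t, i)) = D i"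
      using Z_distr[OF t i] by (simp add: restr_def)
    then show "(\<integral>\<^sup>+z. ennreal ((norm (G i x z - gf i x))\<^sup>2)
        \<partial>distr \<Omega> (D i) (\<lambda>\<omega>. restr {(t, i)} \<omega> (t, i))) \<le> \<sigma>\<^sup>2" for x
      using variance[OF i] by simp
  qed
  then show ?thesis unfolding past by (simp add: restr_def)
qed

lemma nn_integral_noise_le:
  assumes "1 \<le> t"
  shows "(\<integral>\<^sup>+\<omega>. noise t \<omega> \<partial>\<Omega>) \<le> ennreal (real m * \<sigma>\<^sup>2)"
proof -
  have "(\<integral>\<^sup>+\<omega>. noise t \<omega> \<partial>\<Omega>)
      = (\<integral>\<^sup>+\<omega>. (\<Sum>i<m. ennreal ((norm (G i (iter_x t \<omega> i) (Z t i \<omega>) - gf i (iter_x t \<omega> i)))\<^sup>2)) \<partial>\<Omega>)"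
    unfolding noise_def by (intro nn_integral_cong sum_ennreal[symmetric]) simp
  also have "\<dots> = (\<Sum>i<m. \<integral>\<^sup>+\<omega>. (norm (G i (iter_x t \<omega> i) (Z t i \<omega>) - gf i (iter_x t \<omega> i)))\<^sup>2 \<partial>\<Omega>)"
    using measurable_noise_term[OF assms] by (intro nn_integral_sum) simp_all
  also have "\<dots> \<le> (\<Sum>i<m. ennreal (\<sigma>\<^sup>2))"
    by (intro sum_mono nn_integral_noise_term_le[OF assms]) simp
  also have "\<dots> = ennreal (real m * \<sigma>\<^sup>2)" by (simp add: ennreal_mult ennreal_of_nat_eq_real_of_nat)
  finally show ?thesis .
qed

lemma noise_nonneg: "0 \<le> noise t \<omega>"
  by (simp add: noise_def sum_nonneg)

lemma noise_scale_nonneg: "0 \<le> noise_scale"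
  by (simp add: noise_scale_def)

lemma measurable_noise: "1 \<le> t \<Longrightarrow> noise t \<in> borel_measurable \<Omega>"
  unfolding noise_def by (intro borel_measurable_sum measurable_noise_term) simp_all

lemma consensus_dist_sample_grad_le:
  "consensus_dist m (\<lambda>i. G i (iter_x t \<omega> i) (Z t i \<omega>))
     \<le> 3 * (noise t \<omega> + L\<^sup>2 * consensus_dist m (iter_x t \<omega>) + real m * \<zeta>\<^sup>2)"
  using consensus_dist_stoch_grad_le[OF smooth hetero,
      where x = "iter_x t \<omega>" and g = "\<lambda>i. G i (iter_x t \<omega> i) (Z t i \<omega>)"]
  unfolding noise_def by simp

lemma consensus_w_Suc_le:
  assumes t: "1 \<le> t"
  shows "consensus_dist m (iter_w (Suc t) \<omega>)
           \<le> (1 - \<rho>) * consensus_dist m (iter_w t \<omega>)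
             + 3 * (\<eta> * real t)\<^sup>2 / \<rho>
               * (noise t \<omega> + L\<^sup>2 * consensus_dist m (iter_x t \<omega>) + real m * \<zeta>\<^sup>2)"
proof -
  define B where "B = noise t \<omega> + L\<^sup>2 * consensus_dist m (iter_x t \<omega>) + real m * \<zeta>\<^sup>2"
  have "consensus_dist m (iter_w (Suc t) \<omega>)
      \<le> (1 - \<rho>) * consensus_dist m (iter_w t \<omega>)
        + (\<eta> * real t)\<^sup>2 / \<rho> * consensus_dist m (\<lambda>i. G i (iter_x t \<omega> i) (Z t i \<omega>))"
    unfolding iter_Suc(1)[OF t] by (rule consensus_dist_dat_round_fst)
  also have "\<dots> \<le> (1 - \<rho>) * consensus_dist m (iter_w t \<omega>) + (\<eta> * real t)\<^sup>2 / \<rho> * (3 * B)"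
    unfolding B_def using spectral_gap_pos
    by (intro add_left_mono mult_left_mono consensus_dist_sample_grad_le) simp
  finally show ?thesis unfolding B_def[symmetric] by (simp add: mult_ac)
qed

lemma consensus_x_Suc_le:
  assumes t: "1 \<le> t"
  shows "consensus_dist m (iter_x (Suc t) \<omega>)
           \<le> (1 - \<rho>) * consensus_dist m (iter_x t \<omega>)
             + 8 / (\<rho> * (real t + 1)\<^sup>2) * consensus_dist m (iter_w t \<omega>)
             + 24 * \<eta>\<^sup>2 / \<rho>\<^sup>2
               * (noise t \<omega> + L\<^sup>2 * consensus_dist m (iter_x t \<omega>) + real m * \<zeta>\<^sup>2)"
proof -
  define B where "B = noise t \<omega> + L\<^sup>2 * consensus_dist m (iter_x t \<omega>) + real m * \<zeta>\<^sup>2"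
  define \<delta> where "\<delta> = 2 / (real t + 1)"
  have \<delta>: "real t / (\<Sum>s=1..t. real s) = \<delta>" unfolding \<delta>_def by (rule linear_weight_ratio[OF t])
  have \<delta>_le: "0 \<le> \<delta>" "\<delta> \<le> 1" using t by (simp_all add: \<delta>_def field_simps)
  have "\<delta> * real t \<le> 2" unfolding \<delta>_def by (simp add: field_simps)
  then have "(\<delta> * real t)\<^sup>2 \<le> 2\<^sup>2" by (rule power_mono) (simp add: \<delta>_def)
  then have "(\<delta> * real t)\<^sup>2 * \<eta>\<^sup>2 \<le> 4 * \<eta>\<^sup>2" by (intro mult_right_mono) simp_all
  then have coeff: "2 * (\<delta> * \<eta> * real t)\<^sup>2 / \<rho>\<^sup>2 \<le> 2 * (4 * \<eta>\<^sup>2) / \<rho>\<^sup>2"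
    by (intro divide_right_mono mult_left_mono) (simp_all add: power_mult_distrib mult_ac)
  have "consensus_dist m (iter_x (Suc t) \<omega>)
      \<le> (1 - \<rho>) * consensus_dist m (iter_x t \<omega>) + 2 * \<delta>\<^sup>2 / \<rho> * consensus_dist m (iter_w t \<omega>)
        + 2 * (\<delta> * \<eta> * real t)\<^sup>2 / \<rho>\<^sup>2 * consensus_dist m (\<lambda>i. G i (iter_x t \<omega> i) (Z t i \<omega>))"
    using consensus_dist_dat_round_snd[of real t] \<delta>_le unfolding iter_Suc(2)[OF t] \<delta> by simp
  also have "\<dots> \<le> (1 - \<rho>) * consensus_dist m (iter_x t \<omega>) + 2 * \<delta>\<^sup>2 / \<rho> * consensus_dist m (iter_w t \<omega>)
      + 2 * (4 * \<eta>\<^sup>2) / \<rho>\<^sup>2 * (3 * B)"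
    unfolding B_def
    by (intro add_left_mono mult_mono coeff consensus_dist_sample_grad_le)
      (simp_all add: consensus_dist_nonneg)
  also have "\<dots> = (1 - \<rho>) * consensus_dist m (iter_x t \<omega>)
      + 8 / (\<rho> * (real t + 1)\<^sup>2) * consensus_dist m (iter_w t \<omega>) + 24 * \<eta>\<^sup>2 / \<rho>\<^sup>2 * B"
    using spectral_gap_pos by (simp add: \<delta>_def field_simps)
  finally show ?thesis unfolding B_def .
qed

lemma measurable_consensus_dist_iter:
  "(\<lambda>\<omega>. consensus_dist m (iter_w t \<omega>)) \<in> borel_measurable \<Omega>"
  "(\<lambda>\<omega>. consensus_dist m (iter_x t \<omega>)) \<in> borel_measurable \<Omega>"
  by (intro borel_measurable_consensus_dist measurable_iter; assumption)+

lemma expected_w_Suc_le: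
  assumes t: "1 \<le> t"
    and W: "(\<integral>\<^sup>+\<omega>. consensus_dist m (iter_w t \<omega>) \<partial>\<Omega>) \<le> ennreal (9 * (real t)\<^sup>2 * noise_scale / \<rho>\<^sup>2)"
    and X: "(\<integral>\<^sup>+\<omega>. consensus_dist m (iter_x t \<omega>) \<partial>\<Omega>) \<le> ennreal (2560 * noise_scale / \<rho> ^ 4)"
  shows "(\<integral>\<^sup>+\<omega>. consensus_dist m (iter_w (Suc t) \<omega>) \<partial>\<Omega>)
           \<le> ennreal (9 * (real (Suc t))\<^sup>2 * noise_scale / \<rho>\<^sup>2)"
proof -
  have "(\<integral>\<^sup>+\<omega>. consensus_dist m (iter_w (Suc t) \<omega>) \<partial>\<Omega>)
      \<le> ennreal (0 * (2560 * noise_scale / \<rho> ^ 4) + (1 - \<rho>) * (9 * (real t)\<^sup>2 * noise_scale / \<rho>\<^sup>2)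
          + 3 * (\<eta> * real t)\<^sup>2 / \<rho> * (real m * \<sigma>\<^sup>2 + L\<^sup>2 * (2560 * noise_scale / \<rho> ^ 4) + real m * \<zeta>\<^sup>2))"
  proof (rule nn_integral_recursion_le[OF measurable_consensus_dist_iter(2,1) measurable_noise[OF t]
        _ _ _ _ _ _ _ _ _ _ _ X W nn_integral_noise_le[OF t]])
    show "consensus_dist m (iter_w (Suc t) \<omega>) \<le> 0 * consensus_dist m (iter_x t \<omega>)
        + (1 - \<rho>) * consensus_dist m (iter_w t \<omega>)
        + 3 * (\<eta> * real t)\<^sup>2 / \<rho> * (noise t \<omega> + L\<^sup>2 * consensus_dist m (iter_x t \<omega>) + real m * \<zeta>\<^sup>2)"
      for \<omega> using consensus_w_Suc_le[OF t] by simp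
  qed (use spectral_gap_pos spectral_gap_le_1 in
      \<open>simp_all add: consensus_dist_nonneg noise_nonneg noise_scale_nonneg\<close>)
  also have "\<dots> \<le> ennreal (9 * (real (Suc t))\<^sup>2 * noise_scale / \<rho>\<^sup>2)"
    using consensus_w_bound_step[OF spectral_gap_pos spectral_gap_le_1 _ _ step_size,
        of "real t" "real m"]
    by (intro ennreal_leI) (simp add: noise_scale_def ac_simps)
  finally show ?thesis .
qed

lemma expected_x_Suc_le:
  assumes t: "1 \<le> t"
    and W: "(\<integral>\<^sup>+\<omega>. consensus_dist m (iter_w t \<omega>) \<partial>\<Omega>) \<le> ennreal (9 * (real t)\<^sup>2 * noise_scale / \<rho>\<^sup>2)"
    and X: "(\<integral>\<^sup>+\<omega>. consensus_dist m (iter_x t \<omega>) \<partial>\<Omega>) \<le> ennreal (2560 * noise_scale / \<rho> ^ 4)"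
  shows "(\<integral>\<^sup>+\<omega>. consensus_dist m (iter_x (Suc t) \<omega>) \<partial>\<Omega>) \<le> ennreal (2560 * noise_scale / \<rho> ^ 4)"
proof -
  have "(\<integral>\<^sup>+\<omega>. consensus_dist m (iter_x (Suc t) \<omega>) \<partial>\<Omega>)
      \<le> ennreal ((1 - \<rho>) * (2560 * noise_scale / \<rho> ^ 4)
          + 8 / (\<rho> * (real t + 1)\<^sup>2) * (9 * (real t)\<^sup>2 * noise_scale / \<rho>\<^sup>2)
          + 24 * \<eta>\<^sup>2 / \<rho>\<^sup>2 * (real m * \<sigma>\<^sup>2 + L\<^sup>2 * (2560 * noise_scale / \<rho> ^ 4) + real m * \<zeta>\<^sup>2))"
  proof (rule nn_integral_recursion_le[OF measurable_consensus_dist_iter(2,1) measurable_noise[OF t]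
        _ _ _ _ _ _ _ _ _ _ _ X W nn_integral_noise_le[OF t]])
    show "consensus_dist m (iter_x (Suc t) \<omega>) \<le> (1 - \<rho>) * consensus_dist m (iter_x t \<omega>)
        + 8 / (\<rho> * (real t + 1)\<^sup>2) * consensus_dist m (iter_w t \<omega>)
        + 24 * \<eta>\<^sup>2 / \<rho>\<^sup>2 * (noise t \<omega> + L\<^sup>2 * consensus_dist m (iter_x t \<omega>) + real m * \<zeta>\<^sup>2)"
      for \<omega> by (rule consensus_x_Suc_le[OF t])
  qed (use spectral_gap_pos spectral_gap_le_1 in
      \<open>simp_all add: consensus_dist_nonneg noise_nonneg noise_scale_nonneg\<close>)
  also have "\<dots> \<le> ennreal (2560 * noise_scale / \<rho> ^ 4)"
    using consensus_x_bound_step[OF spectral_gap_pos spectral_gap_le_1 _ _ step_size,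
        of "real t" "real m"]
    by (intro ennreal_leI) (simp add: noise_scale_def)
  finally show ?thesis .
qed

lemma expected_consensus_le:
  assumes "1 \<le> t"
  shows "(\<integral>\<^sup>+\<omega>. consensus_dist m (iter_w t \<omega>) \<partial>\<Omega>) \<le> ennreal (9 * (real t)\<^sup>2 * noise_scale / \<rho>\<^sup>2)
       \<and> (\<integral>\<^sup>+\<omega>. consensus_dist m (iter_x t \<omega>) \<partial>\<Omega>) \<le> ennreal (2560 * noise_scale / \<rho> ^ 4)"
  using assms
proof (induction t rule: nat_induct_at_least)
  case base
  have "consensus_dist m (iter_w 1 \<omega>) = 0" "consensus_dist m (iter_x 1 \<omega>) = 0" for \<omega>
    by (simp_all only: iter_1 consensus_dist_const)
  then show ?case by simp
next
  case (Suc t)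
  then show ?case using expected_w_Suc_le expected_x_Suc_le by blast
qed

lemma expected_gradient_gap_le:
  assumes "1 \<le> t"
  shows "(\<integral>\<^sup>+\<omega>. (norm (avg m (\<lambda>i. gf i (iter_x t \<omega> i)) - avg m (\<lambda>i. gf i (avg m (iter_x t \<omega>)))))\<^sup>2 \<partial>\<Omega>)
           \<le> ennreal (2560 * L\<^sup>2 * (2 * \<sigma>\<^sup>2 + \<zeta>\<^sup>2) * \<eta>\<^sup>2 / \<rho> ^ 4)"
proof -
  have "(\<integral>\<^sup>+\<omega>. (norm (avg m (\<lambda>i. gf i (iter_x t \<omega> i)) - avg m (\<lambda>i. gf i (avg m (iter_x t \<omega>)))))\<^sup>2 \<partial>\<Omega>)
      \<le> (\<integral>\<^sup>+\<omega>. ennreal (L\<^sup>2 / real m) * consensus_dist m (iter_x t \<omega>) \<partial>\<Omega>)"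
    using gradient_gap_le[OF smooth]
    by (intro nn_integral_mono) (simp add: ennreal_mult'[symmetric] consensus_dist_nonneg)
  also have "\<dots> = ennreal (L\<^sup>2 / real m) * (\<integral>\<^sup>+\<omega>. consensus_dist m (iter_x t \<omega>) \<partial>\<Omega>)"
    using measurable_consensus_dist_iter(2) by (intro nn_integral_cmult) measurable
  also have "\<dots> \<le> ennreal (L\<^sup>2 / real m) * ennreal (2560 * noise_scale / \<rho> ^ 4)"
    using expected_consensus_le[OF assms] by (intro mult_left_mono) simp_all
  also have "\<dots> = ennreal (2560 * L\<^sup>2 * (2 * \<sigma>\<^sup>2 + \<zeta>\<^sup>2) * \<eta>\<^sup>2 / \<rho> ^ 4)"
  proof -
    have "0 < real m" "\<rho> \<noteq> 0" using m_pos spectral_gap_pos by simp_all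
    then show ?thesis by (simp add: noise_scale_def ennreal_mult'[symmetric] field_simps)
  qed
  finally show ?thesis .
qed

end

lemma step_size_condition:
  fixes \<eta> \<rho> L :: real
  assumes "0 < \<eta>" and "0 < L" and "\<eta> \<le> \<rho>\<^sup>2 / (sqrt 5120 * L)"
  shows "5120 * \<eta>\<^sup>2 * L\<^sup>2 \<le> \<rho> ^ 4"
proof -
  have "\<eta> * (sqrt 5120 * L) \<le> \<rho>\<^sup>2" using assms by (simp add: field_simps)
  then have "(\<eta> * (sqrt 5120 * L))\<^sup>2 \<le> (\<rho>\<^sup>2)\<^sup>2" using assms by (intro power_mono) simp_all
  then show ?thesis by (simp add: power_mult_distrib power_mult[symmetric])
qed

(* Only second moments of the stochastic gradients enter the bound. *)
theorem mainTheorem3: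
  fixes m :: nat and L \<sigma> \<zeta> \<rho> \<eta> :: real
    and D :: "nat \<Rightarrow> 'z measure"
    and F :: "nat \<Rightarrow> 'a::euclidean_space \<Rightarrow> 'z \<Rightarrow> real"
    and G :: "nat \<Rightarrow> 'a \<Rightarrow> 'z \<Rightarrow> 'a"
    and fi :: "nat \<Rightarrow> 'a \<Rightarrow> real"
    and gf :: "nat \<Rightarrow> 'a \<Rightarrow> 'a"
    and P :: "nat \<Rightarrow> nat \<Rightarrow> real"
    and \<Omega> :: "'w measure"
    and Z :: "nat \<Rightarrow> nat \<Rightarrow> 'w \<Rightarrow> 'z"
    and w1 :: 'a and T :: nat
  assumes m_pos: "m \<ge> 1"
    and D_prob: "\<And>i. i < m \<Longrightarrow> prob_space (D i)"
    and F_diff: "\<And>i x z. i < m \<Longrightarrow> z \<in> space (D i) \<Longrightarrow>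
                    ((\<lambda>y. F i y z) has_derivative (\<lambda>h. G i x z \<bullet> h)) (at x)"
    and F_mean: "\<And>i x. i < m \<Longrightarrow> integrable (D i) (F i x) \<and> fi i x = (\<integral>z. F i x z \<partial>D i)"
    and fi_diff: "\<And>i x. i < m \<Longrightarrow> (fi i has_derivative (\<lambda>h. gf i x \<bullet> h)) (at x)"
    and G_unbiased: "\<And>i x. i < m \<Longrightarrow> integrable (D i) (G i x) \<and> (\<integral>z. G i x z \<partial>D i) = gf i x"
    and G_meas: "\<And>i. i < m \<Longrightarrow> (\<lambda>(x, z). G i x z) \<in> borel_measurable (borel \<Otimes>\<^sub>M D i)"
    and L_pos: "L > 0"
    and smooth: "\<And>i x y. i < m \<Longrightarrow> norm (gf i x - gf i y) \<le> L * norm (x - y)"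
    and variance: "\<And>i x. i < m \<Longrightarrow>
                    (\<integral>\<^sup>+ z. ennreal ((norm (G i x z - gf i x))\<^sup>2) \<partial>D i) \<le> ennreal (\<sigma>\<^sup>2)"
    and hetero: "\<And>x. (1 / real m) * (\<Sum>i<m. (norm (gf i x - (1 / real m) *\<^sub>R (\<Sum>j<m. gf j x)))\<^sup>2)
                    \<le> \<zeta>\<^sup>2"
    and gossip: "gossip_matrix m P"
    and rho: "\<rho> = spectral_gap m P"
    and \<Omega>_prob: "prob_space \<Omega>"
    and Z_indep: "prob_space.indep_vars \<Omega> (\<lambda>(t, i). D i) (\<lambda>(t, i). Z t i) ({1..} \<times> {..<m})"
    and Z_distr: "\<And>t i. t \<ge> 1 \<Longrightarrow> i < m \<Longrightarrow> distr \<Omega> (D i) (Z t i) = D i"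
    and eta_pos: "\<eta> > 0"
    and eta_le: "\<eta> \<le> \<rho>\<^sup>2 / (sqrt 5120 * L)"
    and T_pos: "T \<ge> 1"
  shows "(\<Sum>\<tau>=1..T. ennreal ((real \<tau>)\<^sup>2) *
            (\<integral>\<^sup>+ \<omega>. ennreal ((norm ((1 / real m) *\<^sub>R (\<Sum>i<m. gf i
                 (dat_x m P G \<eta> real w1 (\<lambda>t i. Z t i \<omega>) \<tau> i))
               - (1 / real m) *\<^sub>R (\<Sum>j<m. gf j
                 ((1 / real m) *\<^sub>R (\<Sum>i<m. dat_x m P G \<eta> real w1 (\<lambda>t i. Z t i \<omega>) \<tau> i)))))\<^sup>2) \<partial>\<Omega>))
         \<le> ennreal (((sqrt 5120 * L)\<^sup>2 * (2 * \<sigma>\<^sup>2 + \<zeta>\<^sup>2) * \<eta>\<^sup>2 / (2 * \<rho> ^ 4))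
                    * (\<Sum>\<tau>=1..T. (real \<tau>)\<^sup>2))"
proof -
  interpret dat_sgd m P \<Omega> D G gf Z L \<sigma> \<zeta> \<eta> w1
  proof (intro dat_sgd.intro dat_sgd_axioms.intro gossip.intro)
    show "consensus_dist m (\<lambda>i. gf i x) \<le> real m * \<zeta>\<^sup>2" for x
      using hetero[of x] m_pos by (simp add: consensus_dist_def avg_def field_simps)
    show "5120 * \<eta>\<^sup>2 * L\<^sup>2 \<le> spectral_gap m P ^ 4"
      using step_size_condition[OF eta_pos L_pos eta_le] rho by simp
  qed (use gossip \<Omega>_prob m_pos G_meas L_pos smooth variance Z_indep Z_distr in simp_all)
  have "(\<integral>\<^sup>+ \<omega>. ennreal ((norm ((1 / real m) *\<^sub>R (\<Sum>i<m. gf i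
                 (dat_x m P G \<eta> real w1 (\<lambda>t i. Z t i \<omega>) \<tau> i))
               - (1 / real m) *\<^sub>R (\<Sum>j<m. gf j
                 ((1 / real m) *\<^sub>R (\<Sum>i<m. dat_x m P G \<eta> real w1 (\<lambda>t i. Z t i \<omega>) \<tau> i)))))\<^sup>2) \<partial>\<Omega>)
        \<le> ennreal (2560 * L\<^sup>2 * (2 * \<sigma>\<^sup>2 + \<zeta>\<^sup>2) * \<eta>\<^sup>2 / \<rho> ^ 4)" if "1 \<le> \<tau>" for \<tau>
    using expected_gradient_gap_le[OF that] unfolding avg_def iter_x_def rho by simp
  moreover have "(sqrt 5120 * L)\<^sup>2 * (2 * \<sigma>\<^sup>2 + \<zeta>\<^sup>2) * \<eta>\<^sup>2 / (2 * \<rho> ^ 4)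
      = 2560 * L\<^sup>2 * (2 * \<sigma>\<^sup>2 + \<zeta>\<^sup>2) * \<eta>\<^sup>2 / \<rho> ^ 4"
    by (simp add: power_mult_distrib)
  ultimately show ?thesis
    using rho spectral_gap_pos by (intro sum_ennreal_mult_le) simp_all
qed

end
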